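(* Let $\mathcal M_{A,\partial}$ be an $M$-complex with $A=\{a_1\prec\dots\prec a_N\}$. For $k\le N$ write $A^k=\{a_1\prec\dots\prec a_k\}$ and let $\iota_*$ denote the map in homology induced by the inclusion $\mathbb E(A^j)\hookrightarrow\mathbb E(A)$. (1) An element $a_j\in A$ of degree $l$ is $\partial$-homologically essential if and only if $\dim\iota_*(H_l(\mathbb E(A^j),\partial))=\dim\iota_*(H_l(\mathbb E(A^{j-1}),\partial))+1$. The number of homologically essential elements of degree $k$ equals $\dim H_k(\mathcal M_{A,\partial})$. (2) An element $a_i\in A$ is not homologically essential if and only if $\iota_*H_*(\mathbb E(A^i),\partial)=\iota_*H_*(\mathbb E(A^{i-1}),\partial)$. (3) Elements $a_m,a_n\in A$ with $m>n$ form a $\partial$-pair if and only if $\dim H_*(\mathbb E(A^m),\mathbb E(A^n),\partial)=\dim H_*(\mathbb E(A^{m-1}),\mathbb E(A^{n-1}),\partial)=\dim H_*(\mathbb E(A^{m-1}),\mathbb E(A^n),\partial)+1=\dim H_*(\mathbb E(A^m),\mathbb E(A^{n-1}),\partial)+1.$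
   Context: $\mathbb E$ is a field. An $M$-complex $\mathcal M_{A,\partial}$: $A=\{a_1\prec\dots\prec a_N\}$ a finite linearly ordered set with grading $\deg:A\to\mathbb Z$, $\mathbb E(A)$ the graded vector space with basis $A$, and $\partial$ a degree $-1$ linear map with $\partial^2=0$ and $\partial(a_i)\in\mathrm{span}\{a_1,\dots,a_{i-1}\}$ for all $i$ (an $M$-differential). Each $\mathbb E(A^k)$ is a subcomplex, $\dim H_*$ denotes total dimension and relative homology is that of the quotient complex. $\mathrm{Aut}_T(A)$ is the group of graded automorphisms preserving each $\mathrm{span}\{a_1,\dots,a_i\}$; $M$-differentials $\partial_1,\partial_2$ are equivalent if $\partial_2=g\partial_1g^{-1}$, $g\in\mathrm{Aut}_T(A)$. An $M$-differential is elementary if for each $a\in A$ either $\partial(a)=0$ or $\partial(a)=b$ for some $b\in A$, and $\partial(x)=\partial(y)=z$ with $x,y,z\in A$ implies $x=y$. It is known (Barannikov) that every $M$-differential $\partial$ is equivalent to a unique elementary $M$-differential $\partial_1$. Elements $a_i,a_j$ form a $\partial$-pair if $\partial_1(a_i)=a_j$; an element is $\partial$-homologically essential if it belongs to no $\partial$-pair. *)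

theory Defs
  imports Complex_Main "HOL-Library.Function_Algebras"
begin

text \<open>An M-complex with basis A = {a_1 < ... < a_N} is encoded by indices 1..N,
  a grading deg on indices, and the matrix d of the differential:
  d i j is the coefficient of a_i in the boundary of a_j.\<close>

definition fscale :: "'a::field \<Rightarrow> (nat \<Rightarrow> 'a) \<Rightarrow> (nat \<Rightarrow> 'a)" where
  "fscale c v = (\<lambda>n. c * v n)"

definition fdim :: "(nat \<Rightarrow> 'a::field) set \<Rightarrow> nat" where
  "fdim V = vector_space.dim fscale V"

lemma vector_space_fscale: "vector_space (fscale :: 'a::field \<Rightarrow> _)"
  by unfold_locales (auto simp: fscale_def algebra_simps)

definition M_differential :: "nat \<Rightarrow> (nat \<Rightarrow> int) \<Rightarrow> (nat \<Rightarrow> nat \<Rightarrow> 'a::field) \<Rightarrow> bool" where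
  "M_differential N deg d \<longleftrightarrow>
     (\<forall>i j. d i j \<noteq> 0 \<longrightarrow> 1 \<le> i \<and> i < j \<and> j \<le> N \<and> deg i = deg j - 1) \<and>
     (\<forall>i k. (\<Sum>j\<in>{1..N}. d i j * d j k) = 0)"

definition chains :: "nat set \<Rightarrow> (nat \<Rightarrow> 'a::zero) set" where
  "chains S = {v. \<forall>n. n \<notin> S \<longrightarrow> v n = 0}"

definition chains_deg :: "(nat \<Rightarrow> int) \<Rightarrow> nat set \<Rightarrow> int \<Rightarrow> (nat \<Rightarrow> 'a::zero) set" where
  "chains_deg deg S l = {v. \<forall>n. (n \<notin> S \<or> deg n \<noteq> l) \<longrightarrow> v n = 0}"

text \<open>Differential of the complex with basis indexed by S (an interval), with the
  induced differential: for S = {1..k} this is the subcomplex E(A^k); for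
  S = {n+1..m} it is the quotient complex E(A^m)/E(A^n) in its standard basis.\<close>
definition bdry :: "(nat \<Rightarrow> nat \<Rightarrow> 'a::field) \<Rightarrow> nat set \<Rightarrow> (nat \<Rightarrow> 'a) \<Rightarrow> (nat \<Rightarrow> 'a)" where
  "bdry d S v = (\<lambda>i. if i \<in> S then (\<Sum>j\<in>S. d i j * v j) else 0)"

definition cycles_deg where
  "cycles_deg deg d S l = {v \<in> chains_deg deg S l. bdry d S v = 0}"
definition boundaries_deg where
  "boundaries_deg deg d S l = bdry d S ` chains_deg deg S (l + 1)"
definition cycles where
  "cycles d S = {v \<in> chains S. bdry d S v = 0}"
definition boundaries where
  "boundaries d S = bdry d S ` chains S"

definition hdim_deg :: "(nat \<Rightarrow> int) \<Rightarrow> (nat \<Rightarrow> nat \<Rightarrow> 'a::field) \<Rightarrow> nat set \<Rightarrow> int \<Rightarrow> nat" where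
  "hdim_deg deg d S l = fdim (cycles_deg deg d S l) - fdim (boundaries_deg deg d S l)"

definition hdim_tot :: "(nat \<Rightarrow> nat \<Rightarrow> 'a::field) \<Rightarrow> nat set \<Rightarrow> nat" where
  "hdim_tot d S = fdim (cycles d S) - fdim (boundaries d S)"

text \<open>dim H_*(E(A^m), E(A^n)) for n \<le> m: homology of the quotient complex.\<close>
definition rel_hdim :: "(nat \<Rightarrow> nat \<Rightarrow> 'a::field) \<Rightarrow> nat \<Rightarrow> nat \<Rightarrow> nat" where
  "rel_hdim d m n = hdim_tot d {Suc n..m}"

text \<open>dim of iota_*(H_l(E(A^j))) inside H_l(E(A)): (Z_l(A^j) + B_l(A)) / B_l(A).\<close>
definition iota_dim :: "nat \<Rightarrow> (nat \<Rightarrow> int) \<Rightarrow> (nat \<Rightarrow> nat \<Rightarrow> 'a::field) \<Rightarrow> nat \<Rightarrow> int \<Rightarrow> nat" where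
  "iota_dim N deg d j l =
     fdim {z + b | z b. z \<in> cycles_deg deg d {1..j} l \<and> b \<in> boundaries_deg deg d {1..N} l}
     - fdim (boundaries_deg deg d {1..N} l)"

text \<open>iota_*(H_*(E(A^j))) as a set of homology classes (cosets of B_*(A)) in H_*(E(A)).\<close>
definition iota_img :: "nat \<Rightarrow> (nat \<Rightarrow> nat \<Rightarrow> 'a::field) \<Rightarrow> nat \<Rightarrow> (nat \<Rightarrow> 'a) set set" where
  "iota_img N d j = (\<lambda>z. {z + b | b. b \<in> boundaries d {1..N}}) ` cycles d {1..j}"

definition matmul :: "nat \<Rightarrow> (nat \<Rightarrow> nat \<Rightarrow> 'a::field) \<Rightarrow> (nat \<Rightarrow> nat \<Rightarrow> 'a) \<Rightarrow> (nat \<Rightarrow> nat \<Rightarrow> 'a)" where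
  "matmul N x y = (\<lambda>i k. \<Sum>j\<in>{1..N}. x i j * y j k)"

text \<open>Aut_T(A): graded automorphisms of E(A) preserving each span{a_1..a_i}
  (g i j = coefficient of a_i in g(a_j)).\<close>
definition autT :: "nat \<Rightarrow> (nat \<Rightarrow> int) \<Rightarrow> (nat \<Rightarrow> nat \<Rightarrow> 'a::field) \<Rightarrow> bool" where
  "autT N deg g \<longleftrightarrow>
     (\<forall>i j. g i j \<noteq> 0 \<longrightarrow> i \<le> j \<and> deg i = deg j) \<and>
     (\<exists>h. \<forall>i\<in>{1..N}. \<forall>k\<in>{1..N}.
        matmul N g h i k = (if i = k then 1 else 0) \<and> matmul N h g i k = (if i = k then 1 else 0))"

definition M_equiv :: "nat \<Rightarrow> (nat \<Rightarrow> int) \<Rightarrow> (nat \<Rightarrow> nat \<Rightarrow> 'a::field) \<Rightarrow> (nat \<Rightarrow> nat \<Rightarrow> 'a) \<Rightarrow> bool" where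
  "M_equiv N deg d1 d2 \<longleftrightarrow> M_differential N deg d1 \<and> M_differential N deg d2 \<and>
     (\<exists>g h. autT N deg g \<and>
        (\<forall>i\<in>{1..N}. \<forall>k\<in>{1..N}. matmul N g h i k = (if i = k then 1 else 0)
                               \<and> matmul N h g i k = (if i = k then 1 else 0)) \<and>
        (\<forall>i\<in>{1..N}. \<forall>j\<in>{1..N}. d2 i j = matmul N (matmul N g d1) h i j))"

definition elementary :: "nat \<Rightarrow> (nat \<Rightarrow> int) \<Rightarrow> (nat \<Rightarrow> nat \<Rightarrow> 'a::field) \<Rightarrow> bool" where
  "elementary N deg d \<longleftrightarrow> M_differential N deg d \<and>
     (\<forall>j\<in>{1..N}. (\<forall>i. d i j = 0) \<or> (\<exists>i\<in>{1..N}. \<forall>k. d k j = (if k = i then 1 else 0))) \<and>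
     (\<forall>x\<in>{1..N}. \<forall>y\<in>{1..N}. \<forall>z\<in>{1..N}.
        (\<forall>k. d k x = (if k = z then 1 else 0)) \<and> (\<forall>k. d k y = (if k = z then 1 else 0)) \<longrightarrow> x = y)"

text \<open>The unique elementary M-differential equivalent to d (Barannikov).\<close>
definition elem_form :: "nat \<Rightarrow> (nat \<Rightarrow> int) \<Rightarrow> (nat \<Rightarrow> nat \<Rightarrow> 'a::field) \<Rightarrow> (nat \<Rightarrow> nat \<Rightarrow> 'a)" where
  "elem_form N deg d = (THE d1. elementary N deg d1 \<and> M_equiv N deg d d1)"

text \<open>dpair N deg d i j: the elementary form maps a_i to a_j.\<close>
definition dpair :: "nat \<Rightarrow> (nat \<Rightarrow> int) \<Rightarrow> (nat \<Rightarrow> nat \<Rightarrow> 'a::field) \<Rightarrow> nat \<Rightarrow> nat \<Rightarrow> bool" where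
  "dpair N deg d i j \<longleftrightarrow> i \<in> {1..N} \<and> j \<in> {1..N} \<and> elem_form N deg d j i = 1"

definition forms_pair where
  "forms_pair N deg d x y \<longleftrightarrow> dpair N deg d x y \<or> dpair N deg d y x"

definition essential :: "nat \<Rightarrow> (nat \<Rightarrow> int) \<Rightarrow> (nat \<Rightarrow> nat \<Rightarrow> 'a::field) \<Rightarrow> nat \<Rightarrow> bool" where
  "essential N deg d x \<longleftrightarrow> \<not> (\<exists>y. forms_pair N deg d x y)"

end

(*
  Barannikov's reduction: running through a_1, a_2, ... in order, one builds a graded basis
  b_1, b_2, ... of E(A), triangular with respect to A, in which the differential is elementary:
  each b_j is a cycle or is sent onto an earlier b_(t j), with t injective.  The change of basis
  lies in Aut_T(A), so it yields an elementary differential equivalent to d.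

  For an elementary differential everything is a count of basis elements: the cycles of E(S) are
  spanned by the elements of S that are not sources of a pair inside S, the boundaries by the
  targets, so dim H_*(E(S)) = |S| - 2 * #(pairs inside S).  Conjugation by an element of
  Aut_T(A) preserves every E(A^j) and every quotient E(A^m)/E(A^n) and commutes with the
  differentials, so all dimensions in the statement, and equalities between the images of
  iota_*, are the same for d and for its elementary form.  Part (3), proved for elementary
  differentials, then characterises their pairs by invariants of d, which also shows that the
  elementary form is unique.
*)
theory Submission
  imports Defs "HOL-Library.Set_Algebras"
begin

interpretation FS: vector_space "fscale :: 'a::field \<Rightarrow> (nat \<Rightarrow> 'a) \<Rightarrow> _"
  by (rule vector_space_fscale)

lemma sum_mult_delta:
  fixes g :: "nat \<Rightarrow> 'a::comm_semiring_1"
  assumes "finite T"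
  shows "(\<Sum>s\<in>T. g s * (if s = t then 1 else 0)) = (if t \<in> T then g t else 0)"
    and "(\<Sum>s\<in>T. g s * (if t = s then 1 else 0)) = (if t \<in> T then g t else 0)"
    and "(\<Sum>s\<in>T. (if s = t then 1 else 0) * g s) = (if t \<in> T then g t else 0)"
    and "(\<Sum>s\<in>T. (if t = s then 1 else 0) * g s) = (if t \<in> T then g t else 0)"
proof -
  have "(\<Sum>s\<in>T. g s * (if s = t then 1 else 0)) = (\<Sum>s\<in>T. if s = t then g s else 0)"
    by (rule sum.cong) auto
  then show "(\<Sum>s\<in>T. g s * (if s = t then 1 else 0)) = (if t \<in> T then g t else 0)"
    using assms by simp
  then show "(\<Sum>s\<in>T. g s * (if t = s then 1 else 0)) = (if t \<in> T then g t else 0)"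
    and "(\<Sum>s\<in>T. (if s = t then 1 else 0) * g s) = (if t \<in> T then g t else 0)"
    and "(\<Sum>s\<in>T. (if t = s then 1 else 0) * g s) = (if t \<in> T then g t else 0)"
    by (simp_all add: eq_commute[of t] mult.commute[of "if _ then _ else _"])
qed

lemma fun_sum_apply: "(\<Sum>i\<in>I. f i) x = (\<Sum>i\<in>I. f i x)"
  by (induction I rule: infinite_finite_induct) auto

section \<open>Chains\<close>

definition unit_chain :: "nat \<Rightarrow> nat \<Rightarrow> 'a::field" where
  "unit_chain t = (\<lambda>n. if n = t then 1 else 0)"

lemma unit_chain_in_chains_iff: "unit_chain t \<in> chains S \<longleftrightarrow> t \<in> S"
  by (auto simp: unit_chain_def chains_def)

lemma unit_chain_in_chains_deg: "1 \<le> t \<Longrightarrow> unit_chain t \<in> chains_deg deg {1..t} (deg t)"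
  by (auto simp: unit_chain_def chains_deg_def)

lemma chains_deg_eq: "chains_deg deg S l = chains (S \<inter> {n. deg n = l})"
  by (auto simp: chains_deg_def chains_def)

lemma chains_deg_iff: "v \<in> chains_deg deg S l \<longleftrightarrow> v \<in> chains S \<and> v \<in> chains_deg deg UNIV l"
  by (auto simp: chains_deg_def chains_def)

lemma chains_deg_subset_chains: "chains_deg deg S l \<subseteq> chains S"
  by (auto simp: chains_deg_def chains_def)

lemma chains_mono: "S \<subseteq> T \<Longrightarrow> chains S \<subseteq> chains T"
  by (auto simp: chains_def)

lemma chains_Int: "chains A \<inter> chains B = chains (A \<inter> B)"
  by (auto simp: chains_def)

lemma chains_eq_iff: "(chains A :: (nat \<Rightarrow> 'a::field) set) = chains B \<longleftrightarrow> A = B"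
  using unit_chain_in_chains_iff[where 'a='a] by blast

lemma subspace_chains: "FS.subspace (chains T :: (nat \<Rightarrow> 'a::field) set)"
  unfolding FS.subspace_def chains_def fscale_def by auto

lemma set_plus_chains: "chains A + chains B = (chains (A \<union> B) :: (nat \<Rightarrow> 'a::field) set)"
proof
  show "chains A + chains B \<subseteq> (chains (A \<union> B) :: (nat \<Rightarrow> 'a) set)"
    by (auto simp: set_plus_def chains_def)
  show "chains (A \<union> B) \<subseteq> (chains A + chains B :: (nat \<Rightarrow> 'a) set)"
  proof
    fix v :: "nat \<Rightarrow> 'a" assume v: "v \<in> chains (A \<union> B)"
    define z where "z n = (if n \<in> A then v n else 0)" for n
    have "v = z + (v - z)" by simp
    moreover have "z \<in> chains A" "v - z \<in> chains B" using v by (auto simp: z_def chains_def)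
    ultimately show "v \<in> chains A + chains B" by (metis set_plus_intro)
  qed
qed

lemma set_plus_subset_chains:
  "A \<subseteq> chains S \<Longrightarrow> B \<subseteq> chains S \<Longrightarrow> A + B \<subseteq> (chains S :: (nat \<Rightarrow> 'a::field) set)"
proof -
  assume "A \<subseteq> chains S" "B \<subseteq> chains S"
  then have "A + B \<subseteq> chains S + chains S" by (rule set_plus_mono2)
  then show ?thesis by (simp only: set_plus_chains Un_absorb)
qed

lemma fdim_chains:
  assumes "finite T"
  shows "fdim (chains T :: (nat \<Rightarrow> 'a::field) set) = card T"
proof -
  let ?E = "(unit_chain :: nat \<Rightarrow> nat \<Rightarrow> 'a) ` T"
  have inj: "inj (unit_chain :: nat \<Rightarrow> nat \<Rightarrow> 'a)"
    by (rule injI) (metis unit_chain_def zero_neq_one)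
  have span: "FS.span ?E = chains T"
  proof
    show "FS.span ?E \<subseteq> chains T"
      by (rule FS.span_minimal[OF _ subspace_chains]) (auto simp: unit_chain_in_chains_iff)
    show "chains T \<subseteq> FS.span ?E"
    proof
      fix v :: "nat \<Rightarrow> 'a" assume v: "v \<in> chains T"
      have "v = (\<Sum>t\<in>T. fscale (v t) (unit_chain t))"
        using v assms
        by (auto simp: fun_eq_iff fun_sum_apply fscale_def unit_chain_def sum_mult_delta chains_def)
      also have "\<dots> \<in> FS.span ?E"
        by (intro FS.span_sum FS.span_scale FS.span_base) auto
      finally show "v \<in> FS.span ?E" .
    qed
  qed
  have indep: "FS.independent ?E"
  proof (rule FS.independent_if_scalars_zero)
    fix f x assume sum0: "(\<Sum>x\<in>?E. fscale (f x) x) = 0" and x: "x \<in> ?E"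
    then obtain t where t: "t \<in> T" "x = unit_chain t" by auto
    have "(\<Sum>x\<in>?E. fscale (f x) x) t = (\<Sum>s\<in>T. fscale (f (unit_chain s)) (unit_chain s)) t"
      by (subst sum.reindex) (auto intro: inj_on_subset[OF inj])
    also have "\<dots> = f x"
      using t assms by (simp add: fun_sum_apply fscale_def unit_chain_def sum_mult_delta)
    finally show "f x = 0" using sum0 by simp
  qed (use assms in simp)
  have "fdim (chains T :: (nat \<Rightarrow> 'a) set) = card ?E"
    unfolding fdim_def span[symmetric] by (rule FS.dim_span_eq_card_independent[OF indep])
  also have "\<dots> = card T" by (rule card_image[OF inj_on_subset[OF inj]]) simp
  finally show ?thesis .
qed

lemma fdim_image_inj_on:
  fixes f :: "(nat \<Rightarrow> 'a::field) \<Rightarrow> (nat \<Rightarrow> 'a)"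
  assumes lin: "Vector_Spaces.linear fscale fscale f" and "V \<subseteq> W" "FS.subspace W"
    and inj: "inj_on f W"
  shows "fdim (f ` V) = fdim V"
proof -
  interpret P: vector_space_pair "fscale :: 'a \<Rightarrow> _" "fscale :: 'a \<Rightarrow> _"
    by unfold_locales
  obtain B where B: "B \<subseteq> V" "FS.independent B" "V \<subseteq> FS.span B" "card B = FS.dim V"
    using FS.basis_exists[of V] by blast
  have "FS.span B \<subseteq> W"
    using B(1) assms(2,3) by (meson FS.span_minimal order_trans)
  then have injB: "inj_on f (FS.span B)" using inj by (rule inj_on_subset[rotated])
  have "FS.dim (f ` V) = card (f ` B)"
  proof (rule FS.dim_unique)
    show "FS.independent (f ` B)"
      by (rule P.linear_independent_injective_image[OF lin B(2) injB])
    show "f ` V \<subseteq> FS.span (f ` B)"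
      using B(3) P.linear_span_image[OF lin, of B] by auto
  qed (use B(1) in auto)
  also have "\<dots> = card B"
    by (rule card_image) (use injB FS.span_superset in \<open>auto intro: inj_on_subset\<close>)
  finally show ?thesis using B(4) by (simp add: fdim_def)
qed

section \<open>Matrices acting on chains\<close>

lemma linear_bdry: "Vector_Spaces.linear fscale fscale (bdry X S :: (nat \<Rightarrow> 'a::field) \<Rightarrow> _)"
  unfolding Vector_Spaces.linear_iff
  by (auto simp: vector_space_fscale bdry_def fscale_def fun_eq_iff sum.distrib
                 algebra_simps sum_distrib_left)

lemma bdry_add: "bdry X S (u + v) = bdry X S u + bdry X S v"
  by (auto simp: bdry_def fun_eq_iff sum.distrib algebra_simps)

lemma bdry_diff: "bdry X S (u - v) = bdry X S u - bdry X S v"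
  by (auto simp: bdry_def fun_eq_iff sum_subtractf algebra_simps)

lemma bdry_zero [simp]: "bdry X S 0 = 0"
  by (auto simp: bdry_def fun_eq_iff)

lemma bdry_in_chains: "bdry X S v \<in> chains S"
  by (auto simp: bdry_def chains_def)

lemma bdry_cong:
  assumes "\<And>i j. i \<in> S \<Longrightarrow> j \<in> S \<Longrightarrow> X i j = Y i j" "\<And>j. j \<in> S \<Longrightarrow> u j = v j"
  shows "bdry X S u = bdry Y S v"
  using assms by (auto simp: bdry_def fun_eq_iff intro!: sum.cong)

lemma bdry_sum:
  assumes "finite I"
  shows "bdry X S (\<lambda>n. \<Sum>i\<in>I. c i * b i n) = (\<lambda>n. \<Sum>i\<in>I. c i * bdry X S (b i) n)"
proof
  fix n
  show "bdry X S (\<lambda>n. \<Sum>i\<in>I. c i * b i n) n = (\<Sum>i\<in>I. c i * bdry X S (b i) n)"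
  proof (cases "n \<in> S")
    case True
    have "(\<Sum>j\<in>S. X n j * (\<Sum>i\<in>I. c i * b i j)) = (\<Sum>j\<in>S. \<Sum>i\<in>I. c i * (X n j * b i j))"
      by (simp add: sum_distrib_left algebra_simps)
    also have "\<dots> = (\<Sum>i\<in>I. c i * (\<Sum>j\<in>S. X n j * b i j))"
      by (subst sum.swap) (simp add: sum_distrib_left)
    finally show ?thesis using True by (simp add: bdry_def)
  qed (simp add: bdry_def)
qed

lemma bdry_bdry:
  assumes "finite S"
  shows "bdry X S (bdry Y S v) = bdry (\<lambda>i k. \<Sum>j\<in>S. X i j * Y j k) S v"
proof
  fix i
  show "bdry X S (bdry Y S v) i = bdry (\<lambda>i k. \<Sum>j\<in>S. X i j * Y j k) S v i"
  proof (cases "i \<in> S")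
    case True
    have "bdry X S (bdry Y S v) i = (\<Sum>j\<in>S. \<Sum>k\<in>S. X i j * Y j k * v k)"
      using True by (auto simp: bdry_def sum_distrib_left mult.assoc intro!: sum.cong)
    also have "\<dots> = (\<Sum>k\<in>S. (\<Sum>j\<in>S. X i j * Y j k) * v k)"
      by (subst sum.swap) (simp add: sum_distrib_right)
    finally show ?thesis using True by (simp add: bdry_def)
  qed (simp add: bdry_def)
qed

lemma bdry_id:
  assumes "finite S" "v \<in> chains S" "\<And>i k. i \<in> S \<Longrightarrow> k \<in> S \<Longrightarrow> X i k = (if i = k then 1 else 0)"
  shows "bdry X S v = v"
  using assms by (auto simp: fun_eq_iff bdry_def chains_def sum_mult_delta cong: sum.cong)

lemma matmul_assoc: "matmul N (matmul N X Y) Z = matmul N X (matmul N Y Z)"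
proof (intro ext)
  fix i k
  have "matmul N (matmul N X Y) Z i k = (\<Sum>j\<in>{1..N}. \<Sum>m\<in>{1..N}. X i m * Y m j * Z j k)"
    by (simp add: matmul_def sum_distrib_right)
  also have "\<dots> = (\<Sum>m\<in>{1..N}. \<Sum>j\<in>{1..N}. X i m * Y m j * Z j k)"
    by (rule sum.swap)
  also have "\<dots> = matmul N X (matmul N Y Z) i k"
    by (simp add: matmul_def sum_distrib_left mult.assoc)
  finally show "matmul N (matmul N X Y) Z i k = matmul N X (matmul N Y Z) i k" .
qed

lemma matmul_cong:
  assumes "\<And>i j. i \<in> {1..N} \<Longrightarrow> j \<in> {1..N} \<Longrightarrow> X i j = X' i j"
    "\<And>i j. i \<in> {1..N} \<Longrightarrow> j \<in> {1..N} \<Longrightarrow> Y i j = Y' i j"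
    "i \<in> {1..N}" "k \<in> {1..N}"
  shows "matmul N X Y i k = matmul N X' Y' i k"
  using assms unfolding matmul_def by (auto intro!: sum.cong)

definition right_inverse :: "nat \<Rightarrow> (nat \<Rightarrow> nat \<Rightarrow> 'a::field) \<Rightarrow> (nat \<Rightarrow> nat \<Rightarrow> 'a) \<Rightarrow> bool" where
  "right_inverse N X Y \<longleftrightarrow> (\<forall>i\<in>{1..N}. \<forall>k\<in>{1..N}. matmul N X Y i k = (if i = k then 1 else 0))"

lemma matmul_right_inverse_left:
  assumes "right_inverse N X Y" "i \<in> {1..N}" "k \<in> {1..N}"
  shows "matmul N (matmul N X Y) Z i k = Z i k"
proof -
  have "matmul N (matmul N X Y) Z i k = (\<Sum>j\<in>{1..N}. (if i = j then 1 else 0) * Z j k)"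
    unfolding matmul_def[of N "matmul N X Y"]
    by (rule sum.cong) (use assms in \<open>auto simp: right_inverse_def\<close>)
  then show ?thesis using assms by (simp add: sum_mult_delta)
qed

lemma matmul_right_inverse_right:
  assumes "right_inverse N X Y" "i \<in> {1..N}" "k \<in> {1..N}"
  shows "matmul N Z (matmul N X Y) i k = Z i k"
proof -
  have "matmul N Z (matmul N X Y) i k = (\<Sum>j\<in>{1..N}. Z i j * (if j = k then 1 else 0))"
    unfolding matmul_def[of N Z]
    by (rule sum.cong) (use assms in \<open>auto simp: right_inverse_def\<close>)
  then show ?thesis using assms by (simp add: sum_mult_delta)
qed

definition upper_triangular :: "nat \<Rightarrow> (nat \<Rightarrow> nat \<Rightarrow> 'a::zero) \<Rightarrow> bool" where
  "upper_triangular N X \<longleftrightarrow> (\<forall>i\<in>{1..N}. \<forall>j\<in>{1..N}. X i j \<noteq> 0 \<longrightarrow> i \<le> j)"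

definition degree_preserving :: "nat \<Rightarrow> (nat \<Rightarrow> int) \<Rightarrow> (nat \<Rightarrow> nat \<Rightarrow> 'a::zero) \<Rightarrow> bool" where
  "degree_preserving N deg X \<longleftrightarrow> (\<forall>i\<in>{1..N}. \<forall>j\<in>{1..N}. X i j \<noteq> 0 \<longrightarrow> deg i = deg j)"

lemma upper_triangularD:
  "upper_triangular N X \<Longrightarrow> i \<in> {1..N} \<Longrightarrow> j \<in> {1..N} \<Longrightarrow> j < i \<Longrightarrow> X i j = 0"
  unfolding upper_triangular_def by (meson not_le)

lemma degree_preservingD:
  "degree_preserving N deg X \<Longrightarrow> i \<in> {1..N} \<Longrightarrow> j \<in> {1..N} \<Longrightarrow> deg i \<noteq> deg j \<Longrightarrow> X i j = 0"
  unfolding degree_preserving_def by blast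

lemma matmul_upper_triangular_interval:
  assumes "upper_triangular N X" "upper_triangular N Y" "1 \<le> a" "b \<le> N" "i \<in> {a..b}" "k \<in> {a..b}"
  shows "matmul N X Y i k = (\<Sum>j\<in>{a..b}. X i j * Y j k)"
  unfolding matmul_def
proof (rule sum.mono_neutral_right)
  show "\<forall>j\<in>{1..N} - {a..b}. X i j * Y j k = 0"
    using assms unfolding upper_triangular_def by (metis Diff_iff atLeastAtMost_iff
        dual_order.trans linorder_not_le mult_eq_0_iff)
qed (use assms in auto)

lemma bdry_bdry_upper_triangular:
  assumes "upper_triangular N X" "upper_triangular N Y" "1 \<le> a" "b \<le> N"
  shows "bdry X {a..b} (bdry Y {a..b} v) = bdry (matmul N X Y) {a..b} v"
  unfolding bdry_bdry[OF finite_atLeastAtMost]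
  by (rule bdry_cong) (use matmul_upper_triangular_interval[OF assms] in auto)

lemma bdry_upper_triangular_prefix:
  assumes X: "upper_triangular N X" and "j \<le> N" and v: "v \<in> chains {1..j}"
  shows "bdry X {1..j} v = bdry X {1..N} v"
proof
  fix i
  have vanish: "X i k * v k = 0" if "i \<in> {1..N}" "k \<in> {1..N}" "k \<notin> {1..j} \<or> i \<notin> {1..j}" for k
  proof (cases "k \<in> {1..j}")
    case True
    then have "k < i" using that by auto
    then show ?thesis using upper_triangularD[OF X] that(1,2) by simp
  next
    case False
    then show ?thesis using v by (simp add: chains_def)
  qed
  show "bdry X {1..j} v i = bdry X {1..N} v i"
  proof (cases "i \<in> {1..j}")
    case True
    have "(\<Sum>k\<in>{1..j}. X i k * v k) = (\<Sum>k\<in>{1..N}. X i k * v k)"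
      by (rule sum.mono_neutral_left) (use \<open>j \<le> N\<close> True vanish in auto)
    then show ?thesis using True \<open>j \<le> N\<close> by (auto simp: bdry_def)
  next
    case False
    then show ?thesis using vanish by (auto simp: bdry_def intro!: sum.neutral)
  qed
qed

lemma bdry_degree_preserving:
  assumes "degree_preserving N deg X" "S \<subseteq> {1..N}" "v \<in> chains_deg deg S l"
  shows "bdry X S v \<in> chains_deg deg S l"
  using assms unfolding chains_deg_def degree_preserving_def bdry_def
  by (auto intro!: sum.neutral) (metis subsetD)

section \<open>Triangular families of chains\<close>

definition graded_triangular :: "(nat \<Rightarrow> int) \<Rightarrow> nat \<Rightarrow> (nat \<Rightarrow> nat \<Rightarrow> 'a::field) \<Rightarrow> bool" where
  "graded_triangular deg k b \<longleftrightarrow> (\<forall>j\<in>{1..k}. b j \<in> chains_deg deg {1..j} (deg j) \<and> b j j \<noteq> 0)"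

lemma graded_triangular_mono: "graded_triangular deg k b \<Longrightarrow> k' \<le> k \<Longrightarrow> graded_triangular deg k' b"
  by (auto simp: graded_triangular_def)

lemma graded_triangular_update:
  assumes "graded_triangular deg k b" "p \<in> {1..k}" "r \<in> chains_deg deg {1..p} (deg p)" "r p \<noteq> 0"
  shows "graded_triangular deg k (b(p := r))"
  using assms by (simp add: graded_triangular_def)

lemma graded_triangular_Suc:
  assumes "graded_triangular deg k b" "z \<in> chains_deg deg {1..Suc k} (deg (Suc k))" "z (Suc k) \<noteq> 0"
  shows "graded_triangular deg (Suc k) (b(Suc k := z))"
  using assms by (auto simp: graded_triangular_def le_Suc_eq)

lemma graded_triangularD:
  assumes "graded_triangular deg k b" "j \<in> {1..k}"
  shows "b j j \<noteq> 0" and "n \<notin> {1..j} \<Longrightarrow> b j n = 0" and "deg n \<noteq> deg j \<Longrightarrow> b j n = 0"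
  using assms by (auto simp: graded_triangular_def chains_deg_def)

lemma graded_triangular_span:
  assumes "graded_triangular deg k b" "v \<in> chains {1..k}"
  shows "\<exists>c. v = (\<lambda>n. \<Sum>i\<in>{1..k}. c i * b i n)"
  using assms
proof (induction k arbitrary: v)
  case 0
  then show ?case by (auto simp: chains_def fun_eq_iff)
next
  case (Suc k)
  note bK = graded_triangularD[OF Suc.prems(1), of "Suc k"]
  define a where "a = v (Suc k) / b (Suc k) (Suc k)"
  have "v n - a * b (Suc k) n = 0" if "n \<notin> {1..k}" for n
  proof (cases "n = Suc k")
    case False
    with that have "n \<notin> {1..Suc k}" by auto
    with Suc.prems(2) bK(2) show ?thesis by (simp add: chains_def)
  qed (use bK(1) in \<open>simp add: a_def\<close>)
  then have "(\<lambda>n. v n - a * b (Suc k) n) \<in> chains {1..k}"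
    by (simp add: chains_def)
  then obtain c where c: "(\<lambda>n. v n - a * b (Suc k) n) = (\<lambda>n. \<Sum>i\<in>{1..k}. c i * b i n)"
    using Suc.IH[OF graded_triangular_mono[OF Suc.prems(1) le_SucI[OF order_refl]]] by blast
  have "v = (\<lambda>n. \<Sum>i\<in>{1..Suc k}. (c(Suc k := a)) i * b i n)"
  proof
    fix n
    have "v n = a * b (Suc k) n + (\<Sum>i\<in>{1..k}. c i * b i n)"
      using fun_cong[OF c, of n] by (simp add: algebra_simps)
    then show "v n = (\<Sum>i\<in>{1..Suc k}. (c(Suc k := a)) i * b i n)"
      by (simp add: atLeastAtMostSuc_conv)
  qed
  then show ?case by blast
qed

lemma graded_triangular_independent:
  assumes "graded_triangular deg k b" "(\<lambda>n. \<Sum>i\<in>{1..k}. c i * b i n) = 0" "i \<in> {1..k}"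
  shows "c i = 0"
  using assms
proof (induction k)
  case 0
  then show ?case by simp
next
  case (Suc k)
  note bK = graded_triangularD[OF Suc.prems(1), of "Suc k"]
  have "0 = (\<Sum>i\<in>{1..Suc k}. c i * b i (Suc k))"
    using fun_cong[OF Suc.prems(2), of "Suc k"] by simp
  also have "\<dots> = c (Suc k) * b (Suc k) (Suc k)"
    using graded_triangularD(2)[OF Suc.prems(1)] by (simp add: atLeastAtMostSuc_conv)
  finally have cK: "c (Suc k) = 0" using bK by simp
  then have "(\<lambda>n. \<Sum>i\<in>{1..k}. c i * b i n) = 0"
    using Suc.prems(2) by (simp add: atLeastAtMostSuc_conv zero_fun_def)
  note IH = Suc.IH[OF graded_triangular_mono[OF Suc.prems(1)] this]
  show ?case
    using IH Suc.prems(3) cK by (cases "i = Suc k") auto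
qed

text \<open>Dropping the coefficients of the wrong degree works because \<open>b i n \<noteq> 0\<close> forces
  \<open>deg i = deg n\<close>.\<close>
lemma graded_triangular_span_deg:
  assumes b: "graded_triangular deg k b" and v: "v \<in> chains_deg deg {1..k} l"
  shows "\<exists>c. (\<forall>i. c i \<noteq> 0 \<longrightarrow> deg i = l) \<and> v = (\<lambda>n. \<Sum>i\<in>{1..k}. c i * b i n)"
proof -
  obtain c where c: "v = (\<lambda>n. \<Sum>i\<in>{1..k}. c i * b i n)"
    using graded_triangular_span[OF b] v chains_deg_subset_chains by blast
  define c' where "c' i = (if deg i = l then c i else 0)" for i
  have "(\<Sum>i\<in>{1..k}. c' i * b i n) = (\<Sum>i\<in>{1..k}. if deg n = l then c i * b i n else 0)" for n
    using graded_triangularD(3)[OF b] by (intro sum.cong) (auto simp: c'_def)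
  then have "(\<Sum>i\<in>{1..k}. c' i * b i n) = (if deg n = l then v n else 0)" for n
    by (simp add: c)
  also have "\<dots> n = v n" for n
    using v by (simp add: chains_deg_def)
  finally have "v = (\<lambda>n. \<Sum>i\<in>{1..k}. c' i * b i n)" by auto
  then show ?thesis by (intro exI[of _ c']) (simp add: c'_def)
qed

lemma graded_triangular_leading_term:
  assumes b: "graded_triangular deg k b" and p: "p \<in> {1..k}"
    and c: "\<And>i. i \<in> {1..k} \<Longrightarrow> c i \<noteq> 0 \<Longrightarrow> i \<le> p \<and> deg i = deg p"
  shows "(\<lambda>n. \<Sum>i\<in>{1..k}. c i * b i n) \<in> chains_deg deg {1..p} (deg p)"
    and "(\<Sum>i\<in>{1..k}. c i * b i p) = c p * b p p"
proof -
  show "(\<lambda>n. \<Sum>i\<in>{1..k}. c i * b i n) \<in> chains_deg deg {1..p} (deg p)"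
    unfolding chains_deg_def
  proof (intro CollectI allI impI sum.neutral ballI)
    fix n i assume n: "n \<notin> {1..p} \<or> deg n \<noteq> deg p" and i: "i \<in> {1..k}"
    show "c i * b i n = 0"
      using c[OF i] n graded_triangularD(2,3)[OF b i, of n] by fastforce
  qed
  have "c i * b i p = 0" if "i \<in> {1..k} - {p}" for i
    using c that graded_triangularD(2)[OF b, of i p] by fastforce
  then have "(\<Sum>i\<in>{1..k} - {p}. c i * b i p) = 0"
    by (rule sum.neutral[OF ballI])
  then show "(\<Sum>i\<in>{1..k}. c i * b i p) = c p * b p p"
    using p by (simp add: sum.remove)
qed

section \<open>Inverses of triangular matrices\<close>

definition column :: "nat \<Rightarrow> (nat \<Rightarrow> nat \<Rightarrow> 'a::zero) \<Rightarrow> nat \<Rightarrow> nat \<Rightarrow> 'a" where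
  "column N X j = (\<lambda>i. if i \<in> {1..N} then X i j else 0)"

definition basis_matrix :: "nat \<Rightarrow> (nat \<Rightarrow> nat \<Rightarrow> 'a::zero) \<Rightarrow> nat \<Rightarrow> nat \<Rightarrow> 'a" where
  "basis_matrix N b = (\<lambda>i j. if j \<in> {1..N} then b j i else 0)"

lemma graded_triangular_basis_matrix:
  assumes b: "graded_triangular deg N b"
  shows "upper_triangular N (basis_matrix N b)" "degree_preserving N deg (basis_matrix N b)"
    and "j \<in> {1..N} \<Longrightarrow> basis_matrix N b j j \<noteq> 0"
proof -
  have nz: "i \<le> j \<and> deg i = deg j" if "basis_matrix N b i j \<noteq> 0" for i j
  proof -
    have "j \<in> {1..N}" "b j i \<noteq> 0" using that by (simp_all add: basis_matrix_def split: if_splits)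
    then show ?thesis using graded_triangularD(2,3)[OF b, of j i] by auto
  qed
  show "upper_triangular N (basis_matrix N b)" unfolding upper_triangular_def using nz by blast
  show "degree_preserving N deg (basis_matrix N b)" unfolding degree_preserving_def using nz by blast
  show "j \<in> {1..N} \<Longrightarrow> basis_matrix N b j j \<noteq> 0"
    using graded_triangularD(1)[OF b] by (simp add: basis_matrix_def)
qed

lemma bdry_column: "i \<in> {1..N} \<Longrightarrow> bdry Y {1..N} (column N X j) i = matmul N Y X i j"
  by (simp add: bdry_def matmul_def column_def)

lemma graded_triangular_columns:
  assumes "upper_triangular N X" "degree_preserving N deg X" "k \<le> N" "\<And>j. j \<in> {1..k} \<Longrightarrow> X j j \<noteq> 0"
  shows "graded_triangular deg k (column N X)"
  using assms upper_triangularD[OF assms(1)] degree_preservingD[OF assms(2)]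
  by (fastforce simp: graded_triangular_def chains_deg_def column_def)

lemma column_right_inverse_sum:
  assumes "right_inverse N X Y" "j \<in> {1..N}"
  shows "(\<Sum>i\<in>{1..N}. Y i j * column N X i n) = unit_chain j n"
proof (cases "n \<in> {1..N}")
  case True
  then have "(\<Sum>i\<in>{1..N}. Y i j * column N X i n) = matmul N X Y n j"
    by (simp add: matmul_def column_def mult.commute)
  with assms True show ?thesis by (simp add: right_inverse_def unit_chain_def)
next
  case False
  with assms(2) show ?thesis by (auto simp: column_def unit_chain_def)
qed

text \<open>Independence of the columns of \<open>X\<close> makes a right inverse a left inverse.\<close>
lemma graded_triangular_columns_left_inverse:
  assumes b: "graded_triangular deg N (column N X)" and XY: "right_inverse N X Y"
  shows "right_inverse N Y X"
  unfolding right_inverse_def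
proof (intro ballI)
  fix i k assume i: "i \<in> {1..N}" and k: "k \<in> {1..N}"
  let ?b = "column N X"
  have "(\<Sum>i\<in>{1..N}. matmul N Y X i k * ?b i n) = ?b k n" for n
  proof -
    have "(\<Sum>i\<in>{1..N}. matmul N Y X i k * ?b i n) = (\<Sum>i\<in>{1..N}. \<Sum>j\<in>{1..N}. Y i j * X j k * ?b i n)"
      by (simp add: matmul_def sum_distrib_right)
    also have "\<dots> = (\<Sum>j\<in>{1..N}. \<Sum>i\<in>{1..N}. Y i j * X j k * ?b i n)"
      by (rule sum.swap)
    also have "\<dots> = (\<Sum>j\<in>{1..N}. X j k * (\<Sum>i\<in>{1..N}. Y i j * ?b i n))"
      by (simp add: sum_distrib_left algebra_simps)
    also have "\<dots> = (\<Sum>j\<in>{1..N}. X j k * unit_chain j n)"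
      by (rule sum.cong[OF refl]) (subst column_right_inverse_sum[OF XY], simp_all)
    also have "\<dots> = ?b k n"
      by (simp add: unit_chain_def column_def sum_mult_delta(2))
    finally show ?thesis .
  qed
  then have "(\<lambda>n. \<Sum>i\<in>{1..N}. (matmul N Y X i k - (if i = k then 1 else 0)) * ?b i n) = 0"
    using k by (simp add: fun_eq_iff algebra_simps sum_subtractf sum_mult_delta(1))
  then have "matmul N Y X i k - (if i = k then 1 else 0) = 0"
    by (rule graded_triangular_independent[OF b _ i])
  then show "matmul N Y X i k = (if i = k then 1 else 0)" by simp
qed

lemma upper_triangular_inverse_exists:
  assumes X: "upper_triangular N X" "degree_preserving N deg X" and diag: "\<And>j. j \<in> {1..N} \<Longrightarrow> X j j \<noteq> 0"
  shows "\<exists>Y. right_inverse N X Y \<and> right_inverse N Y X \<and> (\<forall>i j. Y i j \<noteq> 0 \<longrightarrow> i \<le> j \<and> deg i = deg j)"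
proof -
  let ?b = "column N X"
  have b: "graded_triangular deg N ?b" by (rule graded_triangular_columns[OF X order_refl diag])
  have "\<exists>c. (\<forall>i. c i \<noteq> 0 \<longrightarrow> deg i = deg j) \<and> unit_chain j = (\<lambda>n. \<Sum>i\<in>{1..j}. c i * ?b i n)"
    if "j \<in> {1..N}" for j
    using that by (intro graded_triangular_span_deg graded_triangular_mono[OF b] unit_chain_in_chains_deg) auto
  then obtain c where c_deg: "\<And>j i. j \<in> {1..N} \<Longrightarrow> c j i \<noteq> 0 \<Longrightarrow> deg i = deg j"
    and c_sum: "\<And>j. j \<in> {1..N} \<Longrightarrow> unit_chain j = (\<lambda>n. \<Sum>i\<in>{1..j}. c j i * ?b i n)"
    by metis
  \<comment> \<open>The \<open>j\<close>-th column of the inverse expresses \<open>unit_chain j\<close> in the columns of \<open>X\<close>.\<close>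
  define Y where "Y i j = (if j \<in> {1..N} \<and> i \<in> {1..j} then c j i else 0)" for i j
  have "right_inverse N X Y"
    unfolding right_inverse_def
  proof (intro ballI)
    fix i k assume i: "i \<in> {1..N}" and k: "k \<in> {1..N}"
    have "matmul N X Y i k = (\<Sum>j\<in>{1..N}. Y j k * ?b j i)"
      using i by (simp add: matmul_def column_def mult.commute)
    also have "\<dots> = (\<Sum>j\<in>{1..k}. c k j * ?b j i)"
      using k by (intro sum.mono_neutral_cong_right) (auto simp: Y_def)
    also have "\<dots> = unit_chain k i"
      using fun_cong[OF c_sum[OF k], of i] by simp
    finally show "matmul N X Y i k = (if i = k then 1 else 0)"
      by (simp add: unit_chain_def)
  qed
  moreover have "Y i j \<noteq> 0 \<longrightarrow> i \<le> j \<and> deg i = deg j" for i j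
    using c_deg by (auto simp: Y_def)
  ultimately show ?thesis
    using graded_triangular_columns_left_inverse[OF b] by blast
qed

lemma upper_triangular_diag_nonzero:
  assumes X: "upper_triangular N X" "degree_preserving N deg X" and YX: "right_inverse N Y X"
    and j: "j \<in> {1..N}"
  shows "X j j \<noteq> 0"
  using j
proof (induction j rule: less_induct)
  case (less j)
  have b: "graded_triangular deg (j - 1) (column N X)"
    using less by (intro graded_triangular_columns[OF X]) auto
  show ?case
  proof
    assume jj: "X j j = 0"
    have "X n j = 0" if "n \<in> {1..N}" "n \<notin> {1..j - 1}" for n
      using jj upper_triangularD[OF X(1) that(1) less.prems] that by (cases "n = j") auto
    then have "column N X j \<in> chains {1..j - 1}"
      by (auto simp: chains_def column_def)
    then obtain c where c: "column N X j = (\<lambda>n. \<Sum>i\<in>{1..j - 1}. c i * column N X i n)"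
      using graded_triangular_span[OF b] by blast
    have "1 = matmul N Y X j j"
      using YX less.prems by (simp add: right_inverse_def)
    also have "\<dots> = bdry Y {1..N} (column N X j) j"
      by (rule bdry_column[OF less.prems, symmetric])
    also have "\<dots> = (\<Sum>i\<in>{1..j - 1}. c i * bdry Y {1..N} (column N X i) j)"
      by (subst c) (simp add: bdry_sum)
    also have "\<dots> = 0"
    proof (intro sum.neutral ballI)
      fix i assume "i \<in> {1..j - 1}"
      then have "matmul N Y X j i = 0" using YX less.prems by (auto simp: right_inverse_def)
      then show "c i * bdry Y {1..N} (column N X i) j = 0" unfolding bdry_column[OF less.prems] by simp
    qed
    finally show False by simp
  qed
qed

text \<open>By uniqueness of inverses, \<open>Y\<close> agrees on \<open>{1..N}\<close> with the triangular inverse of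
  \<open>upper_triangular_inverse_exists\<close>.\<close>
lemma inverse_upper_triangular:
  assumes X: "upper_triangular N X" "degree_preserving N deg X"
    and XY: "right_inverse N X Y" and YX: "right_inverse N Y X"
  shows "upper_triangular N Y \<and> degree_preserving N deg Y"
proof -
  obtain Y' where XY': "right_inverse N X Y'" and Y': "\<forall>i j. Y' i j \<noteq> 0 \<longrightarrow> i \<le> j \<and> deg i = deg j"
    using upper_triangular_inverse_exists[OF X upper_triangular_diag_nonzero[OF X YX]] by blast
  have "Y i j = Y' i j" if "i \<in> {1..N}" "j \<in> {1..N}" for i j
  proof -
    have "Y i j = matmul N Y (matmul N X Y') i j"
      by (rule matmul_right_inverse_right[OF XY' that, symmetric])
    also have "\<dots> = Y' i j"
      unfolding matmul_assoc[symmetric] by (rule matmul_right_inverse_left[OF YX that])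
    finally show ?thesis .
  qed
  then show ?thesis
    using Y' by (auto simp: upper_triangular_def degree_preserving_def)
qed

section \<open>Existence of the elementary form\<close>

lemma M_differential_upper_triangular: "M_differential N deg d \<Longrightarrow> upper_triangular N d"
  unfolding M_differential_def upper_triangular_def by force

locale M_complex =
  fixes N :: nat and deg :: "nat \<Rightarrow> int" and d :: "nat \<Rightarrow> nat \<Rightarrow> 'a::field"
  assumes M_diff: "M_differential N deg d"
begin

abbreviation D where "D \<equiv> bdry d {1..N}"

lemma d_nonzeroD: "d i j \<noteq> 0 \<Longrightarrow> 1 \<le> i \<and> i < j \<and> j \<le> N \<and> deg i = deg j - 1"
  using M_diff unfolding M_differential_def by blast

lemma D_D: "D (D v) = 0"
proof -
  have "D (D v) = bdry (matmul N d d) {1..N} v"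
    using M_differential_upper_triangular[OF M_diff] by (intro bdry_bdry_upper_triangular) auto
  also have "\<dots> = bdry (\<lambda>_ _. 0) {1..N} v"
    using M_diff by (intro bdry_cong) (auto simp: M_differential_def matmul_def)
  finally show ?thesis by (simp add: bdry_def fun_eq_iff)
qed

lemma D_chains_Suc:
  assumes v: "v \<in> chains {1..Suc k}"
  shows "D v \<in> chains {1..k}"
proof -
  have "d i j * v j = 0" if "i \<notin> {1..k}" for i j
  proof (cases "d i j = 0")
    case False
    with d_nonzeroD that have "j \<notin> {1..Suc k}" by fastforce
    with v show ?thesis by (simp add: chains_def)
  qed simp
  then show ?thesis by (auto simp: chains_def bdry_def intro!: sum.neutral)
qed

lemma D_chains_deg:
  assumes v: "v \<in> chains_deg deg S l"
  shows "D v \<in> chains_deg deg UNIV (l - 1)"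
proof -
  have "d i j * v j = 0" if "deg i \<noteq> l - 1" for i j
  proof (cases "d i j = 0")
    case False
    with d_nonzeroD that have "deg j \<noteq> l" by fastforce
    with v show ?thesis by (simp add: chains_deg_def)
  qed simp
  then show ?thesis by (auto simp: chains_deg_def bdry_def intro!: sum.neutral)
qed

text \<open>Barannikov's canonical basis \<open>b 1, \<dots>, b k\<close> of \<open>E(A\<^sup>k)\<close>; \<open>P\<close> is the set of sources of pairs.\<close>
definition reduced_basis :: "nat \<Rightarrow> (nat \<Rightarrow> nat \<Rightarrow> 'a) \<Rightarrow> nat set \<Rightarrow> (nat \<Rightarrow> nat) \<Rightarrow> bool" where
  "reduced_basis k b P t \<longleftrightarrow> graded_triangular deg k b \<and> P \<subseteq> {1..k} \<and> inj_on t P \<and>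
     (\<forall>j\<in>P. t j \<in> {1..<j} \<and> deg (t j) = deg j - 1 \<and> D (b j) = b (t j)) \<and>
     (\<forall>j\<in>{1..k} - P. D (b j) = 0)"

lemma reduced_basis_target_not_source:
  assumes R: "reduced_basis k b P t" and j: "j \<in> P"
  shows "t j \<notin> P"
proof
  assume tj: "t j \<in> P"
  have "b (t (t j)) = D (D (b j))"
    using R j tj by (simp add: reduced_basis_def)
  moreover have "b (t (t j)) (t (t j)) \<noteq> 0"
  proof (rule graded_triangularD(1)[of deg k b])
    show "graded_triangular deg k b" using R by (simp add: reduced_basis_def)
    show "t (t j) \<in> {1..k}" using R j tj by (fastforce simp: reduced_basis_def)
  qed
  ultimately show False using D_D[of "b j"] by simp
qed

text \<open>The boundary of \<open>\<Sum> c i * b i\<close> is \<open>\<Sum>\<^bsub>j\<in>P\<^esub> c j * b (t j)\<close>, and \<open>t\<close> is injective.\<close>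
lemma reduced_basis_cycle_coeffs:
  assumes R: "reduced_basis k b P t" and cycle: "D (\<lambda>n. \<Sum>i\<in>{1..k}. c i * b i n) = 0" and j: "j \<in> P"
  shows "c j = 0"
proof -
  have b: "graded_triangular deg k b" and P: "P \<subseteq> {1..k}" and inj: "inj_on t P"
    and src: "\<And>j. j \<in> P \<Longrightarrow> t j \<in> {1..<j} \<and> D (b j) = b (t j)"
    and cyc: "\<And>j. j \<in> {1..k} - P \<Longrightarrow> D (b j) = 0"
    using R by (auto simp: reduced_basis_def)
  have tP: "t ` P \<subseteq> {1..k}" using P src by fastforce
  define mu where "mu i = (if i \<in> t ` P then c (inv_into P t i) else 0)" for i
  have "(\<lambda>n. \<Sum>i\<in>{1..k}. mu i * b i n) = D (\<lambda>n. \<Sum>i\<in>{1..k}. c i * b i n)"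
  proof
    fix n
    have "(\<Sum>i\<in>{1..k}. mu i * b i n) = (\<Sum>i\<in>t ` P. c (inv_into P t i) * b i n)"
      using tP by (intro sum.mono_neutral_cong_right) (auto simp: mu_def)
    also have "\<dots> = (\<Sum>j\<in>P. c j * b (t j) n)"
      using inj by (simp add: sum.reindex)
    also have "\<dots> = (\<Sum>i\<in>{1..k}. c i * D (b i) n)"
      using P src cyc by (intro sum.mono_neutral_cong_left) auto
    finally show "(\<Sum>i\<in>{1..k}. mu i * b i n) = D (\<lambda>n. \<Sum>i\<in>{1..k}. c i * b i n) n"
      by (simp add: bdry_sum)
  qed
  then have "mu (t j) = 0"
    using cycle tP j by (intro graded_triangular_independent[OF b]) auto
  then show ?thesis using j inj by (simp add: mu_def)
qed

lemma reduced_basis_boundary_unit_chain: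
  assumes R: "reduced_basis k b P t"
  obtains c where "D (unit_chain (Suc k)) = (\<lambda>n. \<Sum>i\<in>{1..k}. c i * b i n)"
    and "\<And>i. c i \<noteq> 0 \<Longrightarrow> i \<notin> P \<and> deg i = deg (Suc k) - 1"
proof -
  have b: "graded_triangular deg k b" using R by (simp add: reduced_basis_def)
  have "D (unit_chain (Suc k)) \<in> chains_deg deg {1..k} (deg (Suc k) - 1)"
    unfolding chains_deg_iff[of _ deg "{1..k}"]
    using D_chains_Suc[of "unit_chain (Suc k)" k] D_chains_deg[OF unit_chain_in_chains_deg[of "Suc k" deg]]
    by (simp add: unit_chain_in_chains_iff)
  then obtain c where c_deg: "\<And>i. c i \<noteq> 0 \<Longrightarrow> deg i = deg (Suc k) - 1"
    and c: "D (unit_chain (Suc k)) = (\<lambda>n. \<Sum>i\<in>{1..k}. c i * b i n)"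
    using graded_triangular_span_deg[OF b] by blast
  have "c j = 0" if "j \<in> P" for j
    using reduced_basis_cycle_coeffs[OF R _ that] D_D[of "unit_chain (Suc k)"] c by simp
  with c c_deg that show thesis by blast
qed

text \<open>The part of \<open>D (unit_chain (Suc k))\<close> along the targets \<open>b (t j)\<close> is the boundary of a
  combination \<open>w\<close> of the sources \<open>b j\<close>; what remains involves only unpaired basis vectors.\<close>
lemma reduced_basis_boundary_decomposition:
  assumes R: "reduced_basis k b P t"
  obtains w c where "w \<in> chains_deg deg {1..k} (deg (Suc k))"
    and "D (unit_chain (Suc k) - w) = (\<lambda>n. \<Sum>i\<in>{1..k}. c i * b i n)"
    and "\<And>i. c i \<noteq> 0 \<Longrightarrow> i \<notin> P \<and> i \<notin> t ` P \<and> deg i = deg (Suc k) - 1"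
proof -
  have b: "graded_triangular deg k b" and P: "P \<subseteq> {1..k}" and inj: "inj_on t P"
    and src: "\<And>j. j \<in> P \<Longrightarrow> t j \<in> {1..<j} \<and> deg (t j) = deg j - 1 \<and> D (b j) = b (t j)"
    using R by (auto simp: reduced_basis_def)
  have tP: "t ` P \<subseteq> {1..k}" using P src by fastforce
  obtain lam where lam: "D (unit_chain (Suc k)) = (\<lambda>n. \<Sum>i\<in>{1..k}. lam i * b i n)"
    and lam_nz: "\<And>i. lam i \<noteq> 0 \<Longrightarrow> i \<notin> P \<and> deg i = deg (Suc k) - 1"
    using reduced_basis_boundary_unit_chain[OF R] by blast
  define w where "w = (\<lambda>n. \<Sum>j\<in>P. lam (t j) * b j n)"
  define c where "c i = (if i \<in> t ` P then 0 else lam i)" for i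
  show thesis
  proof
    show "w \<in> chains_deg deg {1..k} (deg (Suc k))"
      unfolding chains_deg_def w_def
    proof (intro CollectI allI impI sum.neutral ballI)
      fix n j assume n: "n \<notin> {1..k} \<or> deg n \<noteq> deg (Suc k)" and j: "j \<in> P"
      show "lam (t j) * b j n = 0"
      proof (cases "lam (t j) = 0")
        case False
        then have "deg j = deg (Suc k)" using lam_nz src[OF j] by force
        then show ?thesis
          using n j P graded_triangularD(2,3)[OF b, of j n] by auto
      qed simp
    qed
    have "D w = (\<lambda>n. \<Sum>j\<in>P. lam (t j) * b (t j) n)"
      unfolding w_def using P src by (simp add: bdry_sum finite_subset)
    also have "\<dots> = (\<lambda>n. \<Sum>i\<in>t ` P. lam i * b i n)"
      using inj by (simp add: sum.reindex)
    finally have Dw: "D w = (\<lambda>n. \<Sum>i\<in>t ` P. lam i * b i n)" .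
    have "(\<Sum>i\<in>{1..k}. lam i * b i n) = (\<Sum>i\<in>{1..k}. c i * b i n) + (\<Sum>i\<in>t ` P. lam i * b i n)" for n
    proof -
      have "(\<Sum>i\<in>{1..k}. c i * b i n) = (\<Sum>i\<in>{1..k} - t ` P. lam i * b i n)"
        by (intro sum.mono_neutral_cong_right) (auto simp: c_def)
      then show ?thesis using sum.subset_diff[OF tP finite_atLeastAtMost] by simp
    qed
    then show "D (unit_chain (Suc k) - w) = (\<lambda>n. \<Sum>i\<in>{1..k}. c i * b i n)"
      unfolding bdry_diff lam Dw by (simp add: fun_eq_iff)
    show "c i \<noteq> 0 \<Longrightarrow> i \<notin> P \<and> i \<notin> t ` P \<and> deg i = deg (Suc k) - 1" for i
      using lam_nz by (auto simp: c_def split: if_splits)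
  qed
qed

lemma reduced_basis_extend_cycle:
  assumes R: "reduced_basis k b P t"
    and z: "z \<in> chains_deg deg {1..Suc k} (deg (Suc k))" "z (Suc k) \<noteq> 0" "D z = 0"
  shows "reduced_basis (Suc k) (b(Suc k := z)) P t"
proof -
  have b: "graded_triangular deg k b" and P: "P \<subseteq> {1..k}" and inj: "inj_on t P"
    and src: "\<And>j. j \<in> P \<Longrightarrow> t j \<in> {1..<j} \<and> deg (t j) = deg j - 1 \<and> D (b j) = b (t j)"
    and cyc: "\<And>j. j \<in> {1..k} - P \<Longrightarrow> D (b j) = 0"
    using R by (auto simp: reduced_basis_def)
  have "\<forall>j\<in>P. t j \<in> {1..<j} \<and> deg (t j) = deg j - 1 \<and> D ((b(Suc k := z)) j) = (b(Suc k := z)) (t j)"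
  proof
    fix j assume j: "j \<in> P"
    then have "j \<noteq> Suc k" "t j \<noteq> Suc k" using P src[OF j] by auto
    then show "t j \<in> {1..<j} \<and> deg (t j) = deg j - 1 \<and> D ((b(Suc k := z)) j) = (b(Suc k := z)) (t j)"
      using src[OF j] by simp
  qed
  moreover have "\<forall>j\<in>{1..Suc k} - P. D ((b(Suc k := z)) j) = 0"
    using cyc z(3) by (auto simp: le_Suc_eq)
  moreover have "P \<subseteq> {1..Suc k}" using P by auto
  ultimately show ?thesis
    using graded_triangular_Suc[OF b z(1,2)] inj by (simp add: reduced_basis_def)
qed

lemma reduced_basis_extend_pair:
  assumes R: "reduced_basis k b P t"
    and z: "z \<in> chains_deg deg {1..Suc k} (deg (Suc k))" "z (Suc k) \<noteq> 0" "D z = r"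
    and p: "p \<in> {1..k} - P - t ` P" "deg p = deg (Suc k) - 1"
    and r: "r \<in> chains_deg deg {1..p} (deg p)" "r p \<noteq> 0" "D r = 0"
  shows "reduced_basis (Suc k) (b(p := r, Suc k := z)) (insert (Suc k) P) (t(Suc k := p))"
proof -
  have b: "graded_triangular deg k b" and P: "P \<subseteq> {1..k}" and inj: "inj_on t P"
    and src: "\<And>j. j \<in> P \<Longrightarrow> t j \<in> {1..<j} \<and> deg (t j) = deg j - 1 \<and> D (b j) = b (t j)"
    and cyc: "\<And>j. j \<in> {1..k} - P \<Longrightarrow> D (b j) = 0"
    using R by (auto simp: reduced_basis_def)
  let ?b = "b(p := r, Suc k := z)"
  have SucP: "Suc k \<notin> P" and pSuc: "p \<noteq> Suc k" using P p by auto
  have "graded_triangular deg (Suc k) ?b"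
    by (rule graded_triangular_Suc[OF graded_triangular_update[OF b _ r(1,2)] z(1,2)]) (use p in auto)
  moreover have "insert (Suc k) P \<subseteq> {1..Suc k}" using P by auto
  moreover have "inj_on (t(Suc k := p)) (insert (Suc k) P)"
    using inj p(1) SucP by (auto simp: inj_on_def)
  moreover have "\<forall>j\<in>insert (Suc k) P. (t(Suc k := p)) j \<in> {1..<j} \<and> deg ((t(Suc k := p)) j) = deg j - 1 \<and>
        D (?b j) = ?b ((t(Suc k := p)) j)"
  proof
    fix j assume "j \<in> insert (Suc k) P"
    then consider "j = Suc k" | "j \<in> P" by blast
    then show "(t(Suc k := p)) j \<in> {1..<j} \<and> deg ((t(Suc k := p)) j) = deg j - 1 \<and>
        D (?b j) = ?b ((t(Suc k := p)) j)"
    proof cases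
      case 1
      then show ?thesis using p pSuc z(3) by auto
    next
      case 2
      then have "j \<noteq> Suc k" "j \<noteq> p" "t j \<noteq> Suc k" "t j \<noteq> p" using P p src[of j] by auto
      then show ?thesis using src[OF 2] by simp
    qed
  qed
  moreover have "\<forall>j\<in>{1..Suc k} - insert (Suc k) P. D (?b j) = 0"
  proof
    fix j assume "j \<in> {1..Suc k} - insert (Suc k) P"
    then show "D (?b j) = 0"
      using cyc[of j] r(3) pSuc by (cases "j = p") auto
  qed
  ultimately show ?thesis by (simp add: reduced_basis_def)
qed

lemma reduced_basis_Suc:
  assumes R: "reduced_basis k b P t"
  shows "\<exists>b' P' t'. reduced_basis (Suc k) b' P' t'"
proof -
  obtain w c where w: "w \<in> chains_deg deg {1..k} (deg (Suc k))"
    and Dz: "D (unit_chain (Suc k) - w) = (\<lambda>n. \<Sum>i\<in>{1..k}. c i * b i n)"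
    and c: "\<And>i. c i \<noteq> 0 \<Longrightarrow> i \<notin> P \<and> i \<notin> t ` P \<and> deg i = deg (Suc k) - 1"
    using reduced_basis_boundary_decomposition[OF R] by blast
  define z where "z = unit_chain (Suc k) - w"
  have z: "z \<in> chains_deg deg {1..Suc k} (deg (Suc k))" "z (Suc k) \<noteq> 0"
    using w by (auto simp: z_def chains_deg_def unit_chain_def)
  show ?thesis
  proof (cases "\<forall>i\<in>{1..k}. c i = 0")
    case True
    then have "D z = 0" using Dz by (simp add: z_def zero_fun_def)
    then show ?thesis using reduced_basis_extend_cycle[OF R z] by blast
  next
    case False
    \<comment> \<open>Pair \<open>Suc k\<close> with the largest \<open>p\<close> occurring in the boundary, and replace \<open>b p\<close> by it.\<close>
    have b: "graded_triangular deg k b" and cyc: "\<And>j. j \<in> {1..k} - P \<Longrightarrow> D (b j) = 0"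
      using R by (auto simp: reduced_basis_def)
    define p where "p = Max {i\<in>{1..k}. c i \<noteq> 0}"
    have fin: "finite {i\<in>{1..k}. c i \<noteq> 0}" by simp
    have "p \<in> {i\<in>{1..k}. c i \<noteq> 0}"
      unfolding p_def by (rule Max_in[OF fin]) (use False in auto)
    then have p: "p \<in> {1..k}" "c p \<noteq> 0" by auto
    have lead: "i \<le> p \<and> deg i = deg p" if "i \<in> {1..k}" "c i \<noteq> 0" for i
      using that c p(2) Max_ge[OF fin, of i] by (auto simp: p_def)
    define r where "r = (\<lambda>n. \<Sum>i\<in>{1..k}. c i * b i n)"
    have r: "r \<in> chains_deg deg {1..p} (deg p)" "r p \<noteq> 0"
      using graded_triangular_leading_term[OF b p(1) lead] p graded_triangularD(1)[OF b p(1)]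
      by (simp_all add: r_def)
    have vanish: "c i * D (b i) n = 0" if "i \<in> {1..k}" for i n
      using c cyc[of i] that by (cases "c i = 0") auto
    have "D r = 0"
      unfolding r_def bdry_sum[OF finite_atLeastAtMost] zero_fun_def
      by (intro ext sum.neutral ballI vanish)
    then show ?thesis
      using reduced_basis_extend_pair[OF R z] Dz c[OF p(2)] p r
      by (fastforce simp: z_def r_def)
  qed
qed

lemma reduced_basis_exists: "\<exists>b P t. reduced_basis k b P t"
proof (induction k)
  case 0
  have "reduced_basis 0 (\<lambda>_. 0) {} id" by (simp add: reduced_basis_def graded_triangular_def)
  then show ?case by blast
next
  case (Suc k)
  then show ?case using reduced_basis_Suc by blast
qed

definition pairing_matrix :: "nat set \<Rightarrow> (nat \<Rightarrow> nat) \<Rightarrow> nat \<Rightarrow> nat \<Rightarrow> 'a" where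
  "pairing_matrix P t = (\<lambda>i j. if j \<in> P \<and> t j = i then 1 else 0)"

lemma reduced_basis_elementary:
  assumes R: "reduced_basis N b P t"
  shows "elementary N deg (pairing_matrix P t)"
proof -
  let ?e = "\<lambda>i j. if j \<in> P \<and> t j = i then 1 else 0 :: 'a"
  have P: "P \<subseteq> {1..N}" and inj: "inj_on t P"
    and src: "\<And>j. j \<in> P \<Longrightarrow> t j \<in> {1..<j} \<and> deg (t j) = deg j - 1"
    using R by (auto simp: reduced_basis_def)
  have "M_differential N deg ?e"
    unfolding M_differential_def
  proof (rule conjI; intro allI impI)
    fix i j assume "?e i j \<noteq> 0"
    then have "j \<in> P" "t j = i" by (simp_all split: if_splits)
    then show "1 \<le> i \<and> i < j \<and> j \<le> N \<and> deg i = deg j - 1" using P src[of j] by auto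
  next
    fix i k
    have prod: "?e i j * ?e j k = 0" for j
      using reduced_basis_target_not_source[OF R, of k] by auto
    show "(\<Sum>j\<in>{1..N}. ?e i j * ?e j k) = 0" by (intro sum.neutral ballI prod)
  qed
  moreover have "(\<forall>i. ?e i j = 0) \<or> (\<exists>i\<in>{1..N}. \<forall>k. ?e k j = (if k = i then 1 else 0))" for j
  proof (cases "j \<in> P")
    case True
    then have "t j \<in> {1..N}" using P src[OF True] by auto
    moreover have "\<forall>k. ?e k j = (if k = t j then 1 else 0)" using True by auto
    ultimately show ?thesis by blast
  qed simp
  moreover have "x = y" if "\<forall>k. ?e k x = (if k = z then 1 else 0)" "\<forall>k. ?e k y = (if k = z then 1 else 0)"
    for x y z
  proof -
    have "?e z x = 1" "?e z y = 1" using that by simp_all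
    then have "x \<in> P" "y \<in> P" "t x = t y" by (simp_all split: if_splits)
    then show ?thesis using inj by (simp add: inj_on_eq_iff)
  qed
  ultimately show ?thesis unfolding elementary_def pairing_matrix_def by blast
qed

text \<open>In matrix form, \<open>D (b j) = b (t j)\<close> or \<open>0\<close> reads \<open>d B = B e\<close>.\<close>
lemma reduced_basis_matrix_eq:
  assumes R: "reduced_basis N b P t" and i: "i \<in> {1..N}" and j: "j \<in> {1..N}"
  shows "matmul N d (basis_matrix N b) i j = matmul N (basis_matrix N b) (pairing_matrix P t) i j"
proof -
  have src: "\<And>j. j \<in> P \<Longrightarrow> t j \<in> {1..<j} \<and> D (b j) = b (t j)"
    and cyc: "\<And>j. j \<in> {1..N} - P \<Longrightarrow> D (b j) = 0"
    using R by (auto simp: reduced_basis_def)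
  have "matmul N d (basis_matrix N b) i j = D (b j) i"
    using i j by (simp add: matmul_def basis_matrix_def bdry_def)
  also have "\<dots> = (if j \<in> P then b (t j) i else 0)"
    using src cyc j by auto
  also have "\<dots> = matmul N (basis_matrix N b) (pairing_matrix P t) i j"
  proof (cases "j \<in> P")
    case True
    then have "t j \<in> {1..N}" using src[OF True] j by auto
    then show ?thesis
      using True by (simp add: matmul_def pairing_matrix_def basis_matrix_def sum_mult_delta(2))
  qed (simp add: matmul_def pairing_matrix_def)
  finally show ?thesis .
qed

lemma elementary_equivalent_exists: "\<exists>e. elementary N deg e \<and> M_equiv N deg d e"
proof -
  obtain b P t where R: "reduced_basis N b P t" using reduced_basis_exists by blast
  define e :: "nat \<Rightarrow> nat \<Rightarrow> 'a" where "e = pairing_matrix P t"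
  define B where "B = basis_matrix N b"
  have b: "graded_triangular deg N b" using R by (simp add: reduced_basis_def)
  obtain g where Bg: "right_inverse N B g" and gB: "right_inverse N g B"
    and g: "\<forall>i j. g i j \<noteq> 0 \<longrightarrow> i \<le> j \<and> deg i = deg j"
    using upper_triangular_inverse_exists[OF graded_triangular_basis_matrix[OF b]] by (auto simp: B_def)
  have conj: "e i j = matmul N (matmul N g d) B i j" if "i \<in> {1..N}" "j \<in> {1..N}" for i j
  proof -
    have "matmul N (matmul N g d) B i j = matmul N g (matmul N B e) i j"
      unfolding matmul_assoc
      by (rule matmul_cong) (use that reduced_basis_matrix_eq[OF R] in \<open>auto simp: B_def e_def\<close>)
    also have "\<dots> = e i j"
      unfolding matmul_assoc[symmetric] by (rule matmul_right_inverse_left[OF gB that])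
    finally show ?thesis by simp
  qed
  have el: "elementary N deg e"
    unfolding e_def by (rule reduced_basis_elementary[OF R])
  have "M_differential N deg e" using el by (simp add: elementary_def)
  moreover have "autT N deg g" using g gB Bg unfolding autT_def right_inverse_def by blast
  ultimately have "M_equiv N deg d e"
    using M_diff gB Bg conj unfolding M_equiv_def right_inverse_def by blast
  with el show ?thesis by blast
qed

end

section \<open>Elementary differentials\<close>

locale elementary_complex =
  fixes N :: nat and deg :: "nat \<Rightarrow> int" and e :: "nat \<Rightarrow> nat \<Rightarrow> 'a::field"
  assumes elem: "elementary N deg e"
begin

text \<open>\<open>bounds x z\<close> says \<open>\<partial> a\<^sub>x = a\<^sub>z\<close>, i.e.\ \<open>a\<^sub>x, a\<^sub>z\<close> form a \<open>\<partial>\<close>-pair.\<close>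
definition bounds :: "nat \<Rightarrow> nat \<Rightarrow> bool" where
  "bounds x z \<longleftrightarrow> e z x \<noteq> 0"

definition unpaired :: "nat \<Rightarrow> bool" where
  "unpaired x \<longleftrightarrow> \<not> (\<exists>y. bounds x y \<or> bounds y x)"

lemma M_differential_e: "M_differential N deg e"
  using elem by (simp add: elementary_def)

lemma boundsD:
  assumes "bounds x z"
  shows "x \<in> {1..N} \<and> z \<in> {1..N} \<and> z < x \<and> deg z = deg x - 1"
proof -
  have "1 \<le> z \<and> z < x \<and> x \<le> N \<and> deg z = deg x - 1"
    using M_differential_e assms unfolding bounds_def M_differential_def by blast
  then show ?thesis by auto
qed

lemma column_unit: "bounds x z \<Longrightarrow> e k x = (if k = z then 1 else 0)"
proof -
  assume xz: "bounds x z"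
  have "\<forall>j\<in>{1..N}. (\<forall>i. e i j = 0) \<or> (\<exists>i\<in>{1..N}. \<forall>k. e k j = (if k = i then 1 else 0))"
    using elem unfolding elementary_def by blast
  moreover have "x \<in> {1..N}" using boundsD[OF xz] by blast
  ultimately obtain i where "\<forall>k. e k x = (if k = i then 1 else 0)"
    using xz unfolding bounds_def by blast
  with xz show ?thesis by (auto simp: bounds_def split: if_splits)
qed

lemma e_eq: "e z x = (if bounds x z then 1 else 0)"
  using column_unit[of x z] by (auto simp: bounds_def)

lemma bounds_unique_target: "bounds x z \<Longrightarrow> bounds x z' \<Longrightarrow> z = z'"
  using column_unit[of x z] by (auto simp: bounds_def split: if_splits)

lemma bounds_unique_source:
  assumes "bounds x z" "bounds y z"
  shows "x = y"
proof -
  have "\<forall>x\<in>{1..N}. \<forall>y\<in>{1..N}. \<forall>z\<in>{1..N}. (\<forall>k. e k x = (if k = z then 1 else 0)) \<and>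
      (\<forall>k. e k y = (if k = z then 1 else 0)) \<longrightarrow> x = y"
    using elem unfolding elementary_def by (elim conjE)
  moreover have "x \<in> {1..N}" "y \<in> {1..N}" "z \<in> {1..N}"
    using boundsD[OF assms(1)] boundsD[OF assms(2)] by blast+
  ultimately show ?thesis
    using column_unit[OF assms(1)] column_unit[OF assms(2)] by blast
qed

lemma bounds_target_not_source: "bounds x z \<Longrightarrow> \<not> bounds z w"
proof
  assume xz: "bounds x z" and zw: "bounds z w"
  have "(\<Sum>j\<in>{1..N}. e w j * e j x) = 0"
    using M_differential_e by (simp add: M_differential_def)
  moreover have "(\<Sum>j\<in>{1..N}. e w j * e j x) = e w z"
    using boundsD[OF xz] by (simp add: column_unit[OF xz] sum_mult_delta(1))
  ultimately show False using zw by (simp add: bounds_def)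
qed

definition sources :: "nat set \<Rightarrow> nat set" where
  "sources S = {j\<in>S. \<exists>i\<in>S. bounds j i}"

definition targets :: "nat set \<Rightarrow> nat set" where
  "targets S = {i\<in>S. \<exists>j\<in>S. bounds j i}"

lemma sources_subset: "sources S \<subseteq> S" and targets_subset: "targets S \<subseteq> S"
  by (auto simp: sources_def targets_def)

lemma sources_targets_disjoint: "sources S \<inter> targets S = {}"
  using bounds_target_not_source by (auto simp: sources_def targets_def)

lemma card_sources_eq_card_targets:
  assumes "finite S"
  shows "card (sources S) = card (targets S)"
proof -
  define tgt where "tgt j = (THE i. bounds j i)" for j
  have tgt: "tgt j = i" if "bounds j i" for j i
    unfolding tgt_def using that by (blast intro: bounds_unique_target)
  have "bij_betw tgt (sources S) (targets S)"
  proof (rule bij_betw_imageI)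
    show "inj_on tgt (sources S)"
      using tgt bounds_unique_source by (force simp: sources_def intro!: inj_onI)
    show "tgt ` sources S = targets S"
      using tgt by (force simp: sources_def targets_def image_iff)
  qed
  then show ?thesis by (rule bij_betw_same_card)
qed

lemma bdry_target:
  assumes "finite S" "i \<in> S" "j \<in> S" "bounds j i"
  shows "bdry e S v i = v j"
proof -
  have "e i j' = 0" if "j' \<noteq> j" for j'
    using bounds_unique_source[OF _ assms(4), of j'] that by (auto simp: e_eq)
  then have "(\<Sum>j'\<in>S. e i j' * v j') = (\<Sum>j'\<in>{j}. e i j' * v j')"
    using assms by (intro sum.mono_neutral_right) auto
  then show ?thesis using assms by (simp add: bdry_def e_eq)
qed

lemma bdry_not_target: "i \<notin> targets S \<Longrightarrow> bdry e S v i = 0"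
  by (auto simp: bdry_def targets_def e_eq intro!: sum.neutral)

text \<open>The transposed matrix sends each target back to its source.\<close>
lemma bdry_transpose_inverse:
  assumes "finite S" "w \<in> chains (targets S)"
  shows "bdry e S (bdry (\<lambda>i j. e j i) S w) = w"
proof
  fix i
  show "bdry e S (bdry (\<lambda>i j. e j i) S w) i = w i"
  proof (cases "i \<in> targets S")
    case True
    then obtain j where j: "i \<in> S" "j \<in> S" "bounds j i" by (auto simp: targets_def)
    have "e i' j = 0" if "i' \<noteq> i" for i'
      using bounds_unique_target[OF j(3), of i'] that by (auto simp: e_eq)
    then have "(\<Sum>i'\<in>S. e i' j * w i') = (\<Sum>i'\<in>{i}. e i' j * w i')"
      using j assms(1) by (intro sum.mono_neutral_right) auto
    then show ?thesis using bdry_target[OF assms(1) j] j by (simp add: bdry_def e_eq)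
  next
    case False
    with assms(2) show ?thesis by (simp add: bdry_not_target chains_def)
  qed
qed

lemma bdry_transpose_chains_deg:
  assumes "w \<in> chains_deg deg UNIV l"
  shows "bdry (\<lambda>i j. e j i) S w \<in> chains_deg deg S (l + 1)"
  using assms boundsD by (auto simp: chains_deg_def bdry_def e_eq intro!: sum.neutral)

lemma cycles_elementary:
  assumes "finite S"
  shows "cycles e S = chains (S - sources S)"
proof (intro set_eqI iffI)
  fix v assume v: "v \<in> cycles e S"
  have "v j = 0" if j: "j \<in> sources S" for j
  proof -
    obtain i where "i \<in> S" "j \<in> S" "bounds j i" using j by (auto simp: sources_def)
    then have "v j = bdry e S v i" by (simp add: bdry_target[OF assms])
    with v show ?thesis by (simp add: cycles_def)
  qed
  with v show "v \<in> chains (S - sources S)" by (auto simp: cycles_def chains_def)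
next
  fix v :: "nat \<Rightarrow> 'a" assume v: "v \<in> chains (S - sources S)"
  have "e i j * v j = 0" if "i \<in> S" "j \<in> S" for i j
    using v that by (auto simp: e_eq chains_def sources_def)
  then have "bdry e S v = 0" by (auto simp: bdry_def fun_eq_iff intro!: sum.neutral)
  with v show "v \<in> cycles e S" by (auto simp: cycles_def chains_def)
qed

lemma boundaries_elementary:
  assumes "finite S"
  shows "boundaries e S = chains (targets S)"
proof (intro set_eqI iffI)
  fix w assume "w \<in> boundaries e S"
  then show "w \<in> chains (targets S)"
    by (auto simp: boundaries_def chains_def bdry_not_target)
next
  fix w :: "nat \<Rightarrow> 'a" assume "w \<in> chains (targets S)"
  then have "w = bdry e S (bdry (\<lambda>i j. e j i) S w)" by (simp add: bdry_transpose_inverse[OF assms])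
  then show "w \<in> boundaries e S" by (auto simp: boundaries_def intro: bdry_in_chains)
qed

lemma cycles_deg_elementary:
  assumes "finite S"
  shows "cycles_deg deg e S l = chains ((S - sources S) \<inter> {n. deg n = l})"
proof -
  have "cycles_deg deg e S l = chains_deg deg S l \<inter> cycles e S"
    using chains_deg_subset_chains by (auto simp: cycles_deg_def cycles_def)
  also have "\<dots> = chains ((S - sources S) \<inter> {n. deg n = l})"
    unfolding chains_deg_eq cycles_elementary[OF assms] chains_Int by (rule arg_cong[where f = chains]) blast
  finally show ?thesis .
qed

lemma boundaries_deg_elementary:
  assumes "finite S"
  shows "boundaries_deg deg e S l = chains (targets S \<inter> {n. deg n = l})"
proof (intro set_eqI iffI)
  fix w assume "w \<in> boundaries_deg deg e S l"
  then obtain v where w: "w = bdry e S v" and v: "v \<in> chains_deg deg S (l + 1)"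
    by (auto simp: boundaries_deg_def)
  have "bdry e S v i = 0" if "i \<notin> targets S \<inter> {n. deg n = l}" for i
  proof (cases "i \<in> targets S")
    case True
    then obtain j where j: "i \<in> S" "j \<in> S" "bounds j i" by (auto simp: targets_def)
    then have "deg j \<noteq> l + 1" using that True boundsD by auto
    then show ?thesis using v bdry_target[OF assms j] by (simp add: chains_deg_def)
  qed (simp add: bdry_not_target)
  then show "w \<in> chains (targets S \<inter> {n. deg n = l})" by (simp add: w chains_def)
next
  fix w :: "nat \<Rightarrow> 'a" assume w: "w \<in> chains (targets S \<inter> {n. deg n = l})"
  then have "w = bdry e S (bdry (\<lambda>i j. e j i) S w)"
    by (intro bdry_transpose_inverse[OF assms, symmetric]) (auto simp: chains_def)
  moreover have "bdry (\<lambda>i j. e j i) S w \<in> chains_deg deg S (l + 1)"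
    using w by (intro bdry_transpose_chains_deg) (auto simp: chains_def chains_deg_def)
  ultimately show "w \<in> boundaries_deg deg e S l" by (auto simp: boundaries_deg_def)
qed

lemma hdim_tot_elementary:
  assumes "finite S"
  shows "int (hdim_tot e S) = int (card S) - 2 * int (card (sources S))"
proof -
  have fin: "finite (S - sources S)" "finite (targets S)" "finite (sources S)"
    using assms by (auto intro: finite_subset[OF sources_subset] finite_subset[OF targets_subset])
  have "targets S \<subseteq> S - sources S"
    using sources_targets_disjoint targets_subset by blast
  then have le: "card (targets S) \<le> card (S - sources S)"
    using fin(1) by (rule card_mono[rotated])
  have "hdim_tot e S = card (S - sources S) - card (targets S)"
    unfolding hdim_tot_def cycles_elementary[OF assms] boundaries_elementary[OF assms]
      fdim_chains[OF fin(1)] fdim_chains[OF fin(2)] ..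
  moreover have "card (S - sources S) = card S - card (sources S)"
    using fin(3) sources_subset by (rule card_Diff_subset)
  moreover have "card (sources S) \<le> card S"
    using assms sources_subset by (rule card_mono)
  ultimately show ?thesis using le card_sources_eq_card_targets[OF assms] by linarith
qed

lemma card_sources_insert:
  assumes "finite T" "a \<notin> T"
  shows "card (sources (insert a T)) =
    card (sources T) + of_bool (\<exists>i\<in>T. bounds a i) + of_bool (\<exists>j\<in>T. bounds j a)"
proof -
  let ?A = "{j\<in>T. bounds j a}" and ?B = "if \<exists>i\<in>T. bounds a i then {a} else {}"
  have "\<not> bounds a a" using boundsD by blast
  then have eq: "sources (insert a T) = (sources T \<union> ?A) \<union> ?B"
    by (auto simp: sources_def)
  have A: "card ?A = of_bool (\<exists>j\<in>T. bounds j a)"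
  proof (cases "\<exists>j\<in>T. bounds j a")
    case True
    then obtain j where "j \<in> T" "bounds j a" by blast
    then have "?A = {j}" using bounds_unique_source by blast
    with True show ?thesis by simp
  next
    case False
    then have "?A = {}" by blast
    then have "card ?A = 0" by (simp only: card.empty)
    with False show ?thesis by simp
  qed
  have "sources T \<inter> ?A = {}"
    using assms(2) bounds_unique_target by (auto simp: sources_def)
  moreover have "a \<notin> sources T \<union> ?A" using assms(2) sources_subset by blast
  moreover have "finite (sources T)" using assms(1) by (rule finite_subset[OF sources_subset])
  ultimately show ?thesis
    unfolding eq using assms(1) A by (simp add: card_Un_disjoint)
qed

lemma hdim_tot_insert:
  assumes "finite T" "a \<notin> T"
  shows "int (hdim_tot e (insert a T)) =
    int (hdim_tot e T) + 1 - 2 * (of_bool (\<exists>i\<in>T. bounds a i) + of_bool (\<exists>j\<in>T. bounds j a))"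
  using hdim_tot_elementary[of T] hdim_tot_elementary[of "insert a T"] card_sources_insert[OF assms] assms
  by simp

end

lemma set_plus_eq_Collect: "{z + b | z b. z \<in> Z \<and> b \<in> B} = Z + B"
  by (auto simp: set_plus_def)

context elementary_complex
begin

lemma sources_atLeastAtMost: "sources {1..j} = {x\<in>{1..j}. \<exists>y. bounds x y}"
  using boundsD by (fastforce simp: sources_def)

lemma sources_full: "sources {1..N} = {x. \<exists>y. bounds x y}"
  using boundsD by (auto simp: sources_def)

lemma targets_full: "targets {1..N} = {x. \<exists>y. bounds y x}"
  using boundsD by (auto simp: targets_def)

lemma hdim_deg_elementary: "hdim_deg deg e {1..N} k = card {j\<in>{1..N}. deg j = k \<and> unpaired j}"
proof -
  let ?Z = "({1..N} - sources {1..N}) \<inter> {n. deg n = k}"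
  let ?B = "targets {1..N} \<inter> {n. deg n = k}"
  have fin: "finite ?Z" "finite ?B"
    using finite_subset[OF targets_subset finite_atLeastAtMost, of 1 N] by auto
  have "?B \<subseteq> ?Z" using sources_targets_disjoint targets_subset by blast
  then have "hdim_deg deg e {1..N} k = card (?Z - ?B)"
    unfolding hdim_deg_def cycles_deg_elementary[OF finite_atLeastAtMost]
      boundaries_deg_elementary[OF finite_atLeastAtMost] fdim_chains[OF fin(1)] fdim_chains[OF fin(2)]
    using fin by (simp add: card_Diff_subset)
  also have "?Z - ?B = {j\<in>{1..N}. deg j = k \<and> unpaired j}"
    unfolding sources_full targets_full unpaired_def by auto
  finally show ?thesis .
qed

lemma iota_dim_elementary:
  assumes "j \<le> N"
  shows "iota_dim N deg e j l = card {x\<in>{1..j}. deg x = l \<and> unpaired x}"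
proof -
  let ?Z = "({1..j} - sources {1..j}) \<inter> {n. deg n = l}"
  let ?B = "targets {1..N} \<inter> {n. deg n = l}"
  have fin: "finite ?Z" "finite ?B"
    using finite_subset[OF targets_subset finite_atLeastAtMost, of 1 N] by auto
  have "iota_dim N deg e j l = card (?Z \<union> ?B) - card ?B"
    unfolding iota_dim_def set_plus_eq_Collect cycles_deg_elementary[OF finite_atLeastAtMost]
      boundaries_deg_elementary[OF finite_atLeastAtMost] set_plus_chains
    using fin by (simp add: fdim_chains)
  also have "\<dots> = card (?Z - ?B)"
  proof -
    have "card ((?Z - ?B) \<union> ?B) = card (?Z - ?B) + card ?B"
      using fin by (intro card_Un_disjoint) auto
    then show ?thesis by simp
  qed
  also have "?Z - ?B = {x\<in>{1..j}. deg x = l \<and> unpaired x}"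
    unfolding sources_atLeastAtMost targets_full unpaired_def by auto
  finally show ?thesis .
qed

lemma unpaired_iff_iota_dim_step:
  assumes j: "j \<in> {1..N}"
  shows "unpaired j \<longleftrightarrow> iota_dim N deg e j (deg j) = iota_dim N deg e (j - 1) (deg j) + 1"
proof -
  let ?U = "\<lambda>i. {x\<in>{1..i}. deg x = deg j \<and> unpaired x}"
  have U: "?U j = (if unpaired j then insert j (?U (j - 1)) else ?U (j - 1))"
  proof (rule set_eqI)
    fix x
    show "x \<in> ?U j \<longleftrightarrow> x \<in> (if unpaired j then insert j (?U (j - 1)) else ?U (j - 1))"
      using j by (cases "x = j") auto
  qed
  have "card (insert j (?U (j - 1))) = Suc (card (?U (j - 1)))"
    using j by (intro card_insert_disjoint) auto
  then have "card (?U j) = card (?U (j - 1)) + of_bool (unpaired j)"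
    unfolding U by simp
  moreover have "iota_dim N deg e j (deg j) = card (?U j)"
    by (rule iota_dim_elementary) (use j in auto)
  moreover have "iota_dim N deg e (j - 1) (deg j) = card (?U (j - 1))"
    by (rule iota_dim_elementary) (use j in auto)
  ultimately show ?thesis by simp
qed

lemma cycles_plus_boundaries:
  "cycles e {1..i} + boundaries e {1..N} = chains ({x\<in>{1..i}. \<nexists>y. bounds x y} \<union> {x. \<exists>y. bounds y x})"
proof -
  have cyc: "cycles e {1..i} = chains {x\<in>{1..i}. \<nexists>y. bounds x y}"
    unfolding cycles_elementary[OF finite_atLeastAtMost] sources_atLeastAtMost
    by (rule arg_cong[where f = chains]) auto
  show ?thesis
    unfolding cyc boundaries_elementary[OF finite_atLeastAtMost] targets_full set_plus_chains ..
qed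

lemma paired_iff_cycles_plus_boundaries_eq:
  assumes i: "i \<in> {1..N}"
  shows "\<not> unpaired i \<longleftrightarrow>
    cycles e {1..i} + boundaries e {1..N} = cycles e {1..i - 1} + boundaries e {1..N}"
proof -
  let ?A = "\<lambda>k. {x\<in>{1..k}. \<nexists>y. bounds x y}" and ?T = "{x. \<exists>y. bounds y x}"
  have A: "?A i = ?A (i - 1) \<union> {x. x = i \<and> (\<nexists>y. bounds i y)}"
  proof (rule set_eqI)
    fix x
    show "x \<in> ?A i \<longleftrightarrow> x \<in> ?A (i - 1) \<union> {x. x = i \<and> (\<nexists>y. bounds i y)}"
      using i by (cases "x = i") auto
  qed
  have "?A i \<union> ?T = ?A (i - 1) \<union> ?T \<longleftrightarrow> \<not> unpaired i"
  proof
    assume eq: "?A i \<union> ?T = ?A (i - 1) \<union> ?T"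
    show "\<not> unpaired i"
    proof
      assume "unpaired i"
      then have "i \<in> ?A i \<union> ?T" "i \<notin> ?A (i - 1) \<union> ?T" using i by (auto simp: unpaired_def)
      with eq show False by blast
    qed
  next
    assume "\<not> unpaired i"
    then show "?A i \<union> ?T = ?A (i - 1) \<union> ?T" unfolding A by (auto simp: unpaired_def)
  qed
  then show ?thesis
    unfolding cycles_plus_boundaries chains_eq_iff by blast
qed

text \<open>Removing the two ends of \<open>{n..m}\<close> changes the relative homology by the pairs they
  belong to; see \<open>hdim_tot_insert\<close>.\<close>
lemma bounds_iff_rel_hdim:
  assumes m: "m \<in> {1..N}" and n: "n \<in> {1..N}" and nm: "n < m"
  shows "bounds m n \<longleftrightarrow>
    rel_hdim e m n = rel_hdim e (m - 1) (n - 1) \<and>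
    rel_hdim e (m - 1) (n - 1) = rel_hdim e (m - 1) n + 1 \<and>
    rel_hdim e (m - 1) n + 1 = rel_hdim e m (n - 1) + 1"
proof -
  define S where "S = {Suc n..m - 1}"
  have S: "finite S" "m \<notin> S" "n \<notin> S" "n \<notin> insert m S" using nm by (auto simp: S_def)
  have eqs: "{Suc n..m} = insert m S" "{n..m - 1} = insert n S" "{n..m} = insert n (insert m S)"
    using nm by (auto simp: S_def)
  define x where "x = (\<exists>i\<in>S. bounds m i)"
  define y where "y = (\<exists>j\<in>S. bounds j n)"
  have no_m: "\<not> (\<exists>j\<in>S. bounds j m)" and no_n: "\<not> (\<exists>i\<in>insert m S. bounds n i)"
    using boundsD nm by (fastforce simp: S_def)+
  then have "\<not> (\<exists>i\<in>S. bounds n i)" by blast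
  have y_or_z: "(\<exists>j\<in>insert m S. bounds j n) \<longleftrightarrow> y \<or> bounds m n" by (auto simp: y_def)
  have "\<not> (x \<and> bounds m n)" using S(3) bounds_unique_target by (auto simp: x_def)
  moreover have "\<not> (y \<and> bounds m n)" using S(2) bounds_unique_source by (auto simp: y_def)
  moreover have "int (hdim_tot e {Suc n..m}) = int (hdim_tot e S) + 1 - 2 * of_bool x"
    unfolding eqs using hdim_tot_insert[OF S(1,2)] no_m by (simp add: x_def)
  moreover have "int (hdim_tot e {n..m - 1}) = int (hdim_tot e S) + 1 - 2 * of_bool y"
    unfolding eqs using hdim_tot_insert[OF S(1,3)] \<open>\<not> (\<exists>i\<in>S. bounds n i)\<close> by (simp add: y_def)
  moreover have "int (hdim_tot e {n..m}) = int (hdim_tot e S) + 2 - 2 * of_bool x - 2 * of_bool (y \<or> bounds m n)"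
    unfolding eqs using hdim_tot_insert[OF S(1,2)] hdim_tot_insert[of "insert m S" n] S no_m no_n
    by (simp add: x_def y_def y_or_z)
  moreover have "Suc (n - 1) = n" using n by simp
  ultimately show ?thesis
    unfolding rel_hdim_def S_def[symmetric] by (cases x; cases y; cases "bounds m n") simp_all
qed

end

section \<open>Invariance under equivalence\<close>

lemma bdry_image_set_plus: "bdry X S ` (A + B) = bdry X S ` A + bdry X S ` B"
  by (force simp: set_plus_def bdry_add)

lemma zero_in_boundaries: "0 \<in> boundaries d S"
  unfolding boundaries_def by (rule image_eqI[of _ _ 0]) (simp_all add: chains_def)

lemma diff_in_boundaries: "x \<in> boundaries d S \<Longrightarrow> y \<in> boundaries d S \<Longrightarrow> x - y \<in> boundaries d S"
  unfolding boundaries_def by (auto simp: bdry_diff[symmetric] chains_def intro!: imageI)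

lemma coset_images_eq_iff:
  fixes B :: "'a::ab_group_add set"
  assumes zero: "0 \<in> B" and diff: "\<And>x y. x \<in> B \<Longrightarrow> y \<in> B \<Longrightarrow> x - y \<in> B"
  shows "(\<lambda>z. z +o B) ` Z1 = (\<lambda>z. z +o B) ` Z2 \<longleftrightarrow> Z1 + B = Z2 + B"
proof -
  have add: "x + y \<in> B" if "x \<in> B" "y \<in> B" for x y
    using diff[OF that(1) diff[OF zero that(2)]] by simp
  have union: "\<Union> ((\<lambda>z. z +o B) ` Z) = Z + B" for Z
    by (auto simp: set_plus_def elt_set_plus_def)
  have coset: "z +o B = z' +o B" if zz': "z - z' \<in> B" for z z'
  proof (intro set_eqI iffI)
    fix c assume "c \<in> z +o B"
    then obtain b where b: "b \<in> B" and c: "c = z + b" by (auto simp: elt_set_plus_def)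
    have "c = z' + (z - z' + b)" using c by (simp add: algebra_simps)
    then show "c \<in> z' +o B" using add[OF zz' b] unfolding elt_set_plus_def by blast
  next
    fix c assume "c \<in> z' +o B"
    then obtain b where b: "b \<in> B" and c: "c = z' + b" by (auto simp: elt_set_plus_def)
    have "c = z + (b - (z - z'))" using c by (simp add: algebra_simps)
    then show "c \<in> z +o B" using diff[OF b zz'] unfolding elt_set_plus_def by blast
  qed
  have sub: "(\<lambda>z. z +o B) ` Z1 \<subseteq> (\<lambda>z. z +o B) ` Z2" if le: "Z1 + B \<subseteq> Z2 + B" for Z1 Z2
  proof
    fix C assume "C \<in> (\<lambda>z. z +o B) ` Z1"
    then obtain z where z: "z \<in> Z1" "C = z +o B" by blast
    have "z \<in> Z2 + B" using le set_plus_intro[OF z(1) zero] by auto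
    then obtain z' b where "z' \<in> Z2" "b \<in> B" "z = z' + b" unfolding set_plus_def by blast
    then show "C \<in> (\<lambda>z. z +o B) ` Z2" using z coset[of z z'] by auto
  qed
  show ?thesis
    using union[of Z1] union[of Z2] sub[of Z1 Z2] sub[of Z2 Z1] by (metis subset_antisym order_refl)
qed

lemma iota_img_eq_iff:
  "iota_img N d i = iota_img N d i' \<longleftrightarrow>
    cycles d {1..i} + boundaries d {1..N} = cycles d {1..i'} + boundaries d {1..N}"
proof -
  have "iota_img N d j = (\<lambda>z. z +o boundaries d {1..N}) ` cycles d {1..j}" for j
    by (auto simp: iota_img_def elt_set_plus_def)
  moreover have "(\<lambda>z. z +o boundaries d {1..N}) ` Z1 = (\<lambda>z. z +o boundaries d {1..N}) ` Z2 \<longleftrightarrow>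
      Z1 + boundaries d {1..N} = Z2 + boundaries d {1..N}" for Z1 Z2
    by (rule coset_images_eq_iff) (auto intro: zero_in_boundaries diff_in_boundaries)
  ultimately show ?thesis by presburger
qed

locale M_equivalence =
  fixes N :: nat and deg :: "nat \<Rightarrow> int" and d1 d2 g h :: "nat \<Rightarrow> nat \<Rightarrow> 'a::field"
  assumes M_diff1: "M_differential N deg d1" and M_diff2: "M_differential N deg d2"
    and upper_g: "upper_triangular N g" and graded_g: "degree_preserving N deg g"
    and gh: "right_inverse N g h" and hg: "right_inverse N h g"
    and conj: "\<And>i j. i \<in> {1..N} \<Longrightarrow> j \<in> {1..N} \<Longrightarrow> d2 i j = matmul N (matmul N g d1) h i j"
begin

lemma upper_h: "upper_triangular N h" and graded_h: "degree_preserving N deg h"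
  using inverse_upper_triangular[OF upper_g graded_g gh hg] by blast+

lemma matmul_intertwines: "i \<in> {1..N} \<Longrightarrow> k \<in> {1..N} \<Longrightarrow> matmul N d2 g i k = matmul N g d1 i k"
proof -
  assume ik: "i \<in> {1..N}" "k \<in> {1..N}"
  have "matmul N d2 g i k = matmul N (matmul N (matmul N g d1) h) g i k"
    by (rule matmul_cong) (use ik conj in auto)
  also have "\<dots> = matmul N (matmul N g d1) (matmul N h g) i k" by (simp add: matmul_assoc)
  also have "\<dots> = matmul N g d1 i k" by (rule matmul_right_inverse_right[OF hg ik])
  finally show ?thesis .
qed

context
  fixes a b :: nat
  assumes a: "1 \<le> a" and b: "b \<le> N"
begin

abbreviation G where "G \<equiv> bdry g {a..b}"
abbreviation H where "H \<equiv> bdry h {a..b}"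

lemma interval_subset: "{a..b} \<subseteq> {1..N}" using a b by auto

lemma G_H: "v \<in> chains {a..b} \<Longrightarrow> G (H v) = v"
  unfolding bdry_bdry_upper_triangular[OF upper_g upper_h a b]
  by (rule bdry_id) (use gh interval_subset in \<open>auto simp: right_inverse_def\<close>)

lemma H_G: "v \<in> chains {a..b} \<Longrightarrow> H (G v) = v"
  unfolding bdry_bdry_upper_triangular[OF upper_h upper_g a b]
  by (rule bdry_id) (use hg interval_subset in \<open>auto simp: right_inverse_def\<close>)

lemma bdry_G: "bdry d2 {a..b} (G v) = G (bdry d1 {a..b} v)"
  unfolding bdry_bdry_upper_triangular[OF M_differential_upper_triangular[OF M_diff2] upper_g a b]
    bdry_bdry_upper_triangular[OF upper_g M_differential_upper_triangular[OF M_diff1] a b]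
  by (rule bdry_cong) (use matmul_intertwines interval_subset in auto)

lemma G_image:
  assumes "V \<subseteq> chains {a..b}" "\<And>v. v \<in> V \<Longrightarrow> G v \<in> V" "\<And>v. v \<in> V \<Longrightarrow> H v \<in> V"
  shows "G ` V = V"
proof
  show "G ` V \<subseteq> V" using assms(2) by blast
  show "V \<subseteq> G ` V"
  proof
    fix v assume v: "v \<in> V"
    then have "v = G (H v)" using G_H assms(1) by auto
    with v assms(3) show "v \<in> G ` V" by blast
  qed
qed

lemma G_image_chains: "G ` chains {a..b} = chains {a..b}"
  by (rule G_image) (auto intro: bdry_in_chains)

lemma G_image_chains_deg: "G ` chains_deg deg {a..b} l = chains_deg deg {a..b} l"
  by (rule G_image[OF chains_deg_subset_chains bdry_degree_preserving[OF graded_g interval_subset]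
        bdry_degree_preserving[OF graded_h interval_subset]])

lemma cycles_image:
  assumes "G ` V = V" "V \<subseteq> chains {a..b}"
  shows "{v\<in>V. bdry d2 {a..b} v = 0} = G ` {v\<in>V. bdry d1 {a..b} v = 0}"
proof (intro set_eqI iffI)
  fix w assume w: "w \<in> {v\<in>V. bdry d2 {a..b} v = 0}"
  then obtain v where v: "v \<in> V" "w = G v" using assms(1) by blast
  then have "G (bdry d1 {a..b} v) = 0" using w bdry_G by simp
  then have "bdry d1 {a..b} v = 0" using H_G[OF bdry_in_chains] by (metis bdry_zero)
  with v show "w \<in> G ` {v\<in>V. bdry d1 {a..b} v = 0}" by blast
next
  fix w assume "w \<in> G ` {v\<in>V. bdry d1 {a..b} v = 0}"
  then show "w \<in> {v\<in>V. bdry d2 {a..b} v = 0}" using assms(1) bdry_G by auto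
qed

lemma boundaries_image:
  assumes "G ` V = V"
  shows "bdry d2 {a..b} ` V = G ` bdry d1 {a..b} ` V"
  by (metis (no_types, lifting) assms bdry_G image_cong image_image)

lemma cycles_eq_image: "cycles d2 {a..b} = G ` cycles d1 {a..b}"
  using cycles_image[OF G_image_chains order_refl] by (simp add: cycles_def)

lemma boundaries_eq_image: "boundaries d2 {a..b} = G ` boundaries d1 {a..b}"
  using boundaries_image[OF G_image_chains] by (simp add: boundaries_def)

lemma cycles_deg_eq_image: "cycles_deg deg d2 {a..b} l = G ` cycles_deg deg d1 {a..b} l"
  using cycles_image[OF G_image_chains_deg chains_deg_subset_chains] by (simp add: cycles_deg_def)

lemma boundaries_deg_eq_image: "boundaries_deg deg d2 {a..b} l = G ` boundaries_deg deg d1 {a..b} l"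
  using boundaries_image[OF G_image_chains_deg] by (simp add: boundaries_deg_def)

lemma fdim_G_image: "V \<subseteq> chains {a..b} \<Longrightarrow> fdim (G ` V) = fdim V"
  by (rule fdim_image_inj_on[OF linear_bdry _ subspace_chains]) (auto intro: inj_on_inverseI H_G)

lemma hdim_tot_eq: "hdim_tot d2 {a..b} = hdim_tot d1 {a..b}"
proof -
  have "cycles d1 {a..b} \<subseteq> chains {a..b}" "boundaries d1 {a..b} \<subseteq> chains {a..b}"
    using bdry_in_chains by (auto simp: cycles_def boundaries_def)
  then show ?thesis
    unfolding hdim_tot_def cycles_eq_image boundaries_eq_image by (simp add: fdim_G_image)
qed

lemma hdim_deg_eq: "hdim_deg deg d2 {a..b} l = hdim_deg deg d1 {a..b} l"
proof -
  have "cycles_deg deg d1 {a..b} l \<subseteq> chains {a..b}" "boundaries_deg deg d1 {a..b} l \<subseteq> chains {a..b}"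
    using chains_deg_subset_chains bdry_in_chains by (auto simp: cycles_deg_def boundaries_deg_def)
  then show ?thesis
    unfolding hdim_deg_def cycles_deg_eq_image boundaries_deg_eq_image by (simp add: fdim_G_image)
qed

end

lemma G_prefix_image:
  assumes "j \<le> N" "V \<subseteq> chains {1..j}"
  shows "bdry g {1..j} ` V = bdry g {1..N} ` V"
  using bdry_upper_triangular_prefix[OF upper_g assms(1)] assms(2) by (auto intro!: image_cong)

lemma iota_dim_eq:
  assumes j: "j \<le> N"
  shows "iota_dim N deg d2 j l = iota_dim N deg d1 j l"
proof -
  let ?G = "bdry g {1..N}" and ?Z = "cycles_deg deg d1 {1..j} l" and ?B = "boundaries_deg deg d1 {1..N} l"
  have Z_sub: "?Z \<subseteq> chains {1..j}"
    using chains_deg_subset_chains by (auto simp: cycles_deg_def)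
  have "cycles_deg deg d2 {1..j} l = bdry g {1..j} ` ?Z"
    by (rule cycles_deg_eq_image) (use j in auto)
  also have "\<dots> = ?G ` ?Z" by (rule G_prefix_image[OF j Z_sub])
  finally have Z: "cycles_deg deg d2 {1..j} l = ?G ` ?Z" .
  have B: "boundaries_deg deg d2 {1..N} l = ?G ` ?B"
    by (rule boundaries_deg_eq_image) auto
  have B_sub: "?B \<subseteq> chains {1..N}"
    using bdry_in_chains by (auto simp: boundaries_deg_def)
  moreover have "?Z + ?B \<subseteq> chains {1..N}"
    using Z_sub chains_mono[of "{1..j}" "{1..N}"] j B_sub by (intro set_plus_subset_chains) auto
  ultimately show ?thesis
    unfolding iota_dim_def set_plus_eq_Collect Z B bdry_image_set_plus[symmetric]
    by (simp add: fdim_G_image)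
qed

lemma cycles_plus_boundaries_eq_iff:
  assumes "i \<le> N" "i' \<le> N"
  shows "cycles d2 {1..i} + boundaries d2 {1..N} = cycles d2 {1..i'} + boundaries d2 {1..N} \<longleftrightarrow>
    cycles d1 {1..i} + boundaries d1 {1..N} = cycles d1 {1..i'} + boundaries d1 {1..N}"
proof -
  let ?G = "bdry g {1..N}"
  have image: "cycles d2 {1..k} + boundaries d2 {1..N} = ?G ` (cycles d1 {1..k} + boundaries d1 {1..N})"
    and sub: "cycles d1 {1..k} + boundaries d1 {1..N} \<subseteq> chains {1..N}" if k: "k \<le> N" for k
  proof -
    have Z_sub: "cycles d1 {1..k} \<subseteq> chains {1..k}" by (auto simp: cycles_def)
    have "cycles d2 {1..k} = bdry g {1..k} ` cycles d1 {1..k}"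
      by (rule cycles_eq_image) (use k in auto)
    also have "\<dots> = ?G ` cycles d1 {1..k}" by (rule G_prefix_image[OF k Z_sub])
    finally have "cycles d2 {1..k} = ?G ` cycles d1 {1..k}" .
    moreover have "boundaries d2 {1..N} = ?G ` boundaries d1 {1..N}"
      by (rule boundaries_eq_image) auto
    ultimately show "cycles d2 {1..k} + boundaries d2 {1..N} = ?G ` (cycles d1 {1..k} + boundaries d1 {1..N})"
      by (simp add: bdry_image_set_plus)
    show "cycles d1 {1..k} + boundaries d1 {1..N} \<subseteq> chains {1..N}"
      using Z_sub chains_mono[of "{1..k}" "{1..N}"] k bdry_in_chains
      by (intro set_plus_subset_chains) (auto simp: boundaries_def)
  qed
  have "inj_on ?G (chains {1..N})" by (rule inj_on_inverseI[where g = "bdry h {1..N}"]) (rule H_G, auto)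
  then show ?thesis
    unfolding image[OF assms(1)] image[OF assms(2)] by (rule inj_on_image_eq_iff[OF _ sub sub]) fact+
qed

end

section \<open>The elementary form\<close>

lemma M_equiv_M_equivalence:
  assumes "M_equiv N deg d1 d2"
  obtains g h where "M_equivalence N deg d1 d2 g h"
proof -
  obtain g h where g: "autT N deg g" and gh: "right_inverse N g h" and hg: "right_inverse N h g"
    and conj: "\<forall>i\<in>{1..N}. \<forall>j\<in>{1..N}. d2 i j = matmul N (matmul N g d1) h i j"
    and M: "M_differential N deg d1" "M_differential N deg d2"
    using assms unfolding M_equiv_def right_inverse_def by blast
  have "upper_triangular N g" "degree_preserving N deg g"
    using g unfolding autT_def upper_triangular_def degree_preserving_def by blast+
  with M gh hg conj have "M_equivalence N deg d1 d2 g h"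
    by (simp add: M_equivalence_def)
  then show thesis by (rule that)
qed

lemma (in M_equivalence) rel_hdim_eq: "m \<le> N \<Longrightarrow> rel_hdim d2 m n = rel_hdim d1 m n"
  unfolding rel_hdim_def by (rule hdim_tot_eq) simp_all

text \<open>Uniqueness holds because the pairs of an elementary differential are determined by
  the relative homology of \<open>d\<close>, by \<open>bounds_iff_rel_hdim\<close>.\<close>
lemma elementary_equiv_unique:
  assumes e1: "elementary N deg e1" "M_equiv N deg d e1"
    and e2: "elementary N deg e2" "M_equiv N deg d e2"
  shows "e1 = e2"
proof -
  interpret E1: elementary_complex N deg e1 by (rule elementary_complex.intro) (rule e1(1))
  interpret E2: elementary_complex N deg e2 by (rule elementary_complex.intro) (rule e2(1))
  obtain g1 h1 where "M_equivalence N deg d e1 g1 h1" using M_equiv_M_equivalence[OF e1(2)] .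
  then interpret Q1: M_equivalence N deg d e1 g1 h1 .
  obtain g2 h2 where "M_equivalence N deg d e2 g2 h2" using M_equiv_M_equivalence[OF e2(2)] .
  then interpret Q2: M_equivalence N deg d e2 g2 h2 .
  have "E1.bounds m n \<longleftrightarrow> E2.bounds m n" for m n
  proof (cases "m \<in> {1..N} \<and> n \<in> {1..N} \<and> n < m")
    case True
    then have m: "m \<in> {1..N}" and n: "n \<in> {1..N}" and nm: "n < m" and "m \<le> N" "m - 1 \<le> N"
      by auto
    then show ?thesis
      unfolding E1.bounds_iff_rel_hdim[OF m n nm] E2.bounds_iff_rel_hdim[OF m n nm]
      using Q1.rel_hdim_eq Q2.rel_hdim_eq by simp
  next
    case False
    then show ?thesis using E1.boundsD E2.boundsD by blast
  qed
  then show ?thesis using E1.e_eq E2.e_eq by (simp add: fun_eq_iff)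
qed

context M_complex
begin

lemma elem_form: "elementary N deg (elem_form N deg d) \<and> M_equiv N deg d (elem_form N deg d)"
  unfolding elem_form_def
  by (rule theI'[of "\<lambda>e. elementary N deg e \<and> M_equiv N deg d e"])
    (use elementary_equivalent_exists elementary_equiv_unique in blast)

sublocale E: elementary_complex N deg "elem_form N deg d"
  using elem_form by (simp add: elementary_complex_def)

lemma elem_form_M_equivalence:
  obtains g h where "M_equivalence N deg d (elem_form N deg d) g h"
  using elem_form M_equiv_M_equivalence by blast

lemma forms_pair_iff_bounds: "forms_pair N deg d x y \<longleftrightarrow> E.bounds x y \<or> E.bounds y x"
proof -
  have "dpair N deg d i j \<longleftrightarrow> E.bounds i j" for i j
    using E.e_eq[of j i] E.boundsD[of i j] by (auto simp: dpair_def)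
  then show ?thesis by (simp add: forms_pair_def)
qed

lemma essential_iff_unpaired: "essential N deg d x \<longleftrightarrow> E.unpaired x"
  by (simp add: essential_def E.unpaired_def forms_pair_iff_bounds)

lemma essential_iff_iota_dim_step:
  assumes j: "j \<in> {1..N}"
  shows "essential N deg d j \<longleftrightarrow> iota_dim N deg d j (deg j) = iota_dim N deg d (j - 1) (deg j) + 1"
proof -
  obtain g h where "M_equivalence N deg d (elem_form N deg d) g h" by (rule elem_form_M_equivalence)
  then interpret Q: M_equivalence N deg d "elem_form N deg d" g h .
  have "j \<le> N" "j - 1 \<le> N" using j by auto
  then show ?thesis
    using E.unpaired_iff_iota_dim_step[OF j] Q.iota_dim_eq by (simp add: essential_iff_unpaired)
qed

lemma card_essential_eq_hdim_deg:
  "card {j\<in>{1..N}. deg j = k \<and> essential N deg d j} = hdim_deg deg d {1..N} k"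
proof -
  obtain g h where "M_equivalence N deg d (elem_form N deg d) g h" by (rule elem_form_M_equivalence)
  then interpret Q: M_equivalence N deg d "elem_form N deg d" g h .
  show ?thesis
    using E.hdim_deg_elementary[of k] Q.hdim_deg_eq[of 1 N k] by (simp add: essential_iff_unpaired)
qed

lemma not_essential_iff_iota_img_eq:
  assumes i: "i \<in> {1..N}"
  shows "\<not> essential N deg d i \<longleftrightarrow> iota_img N d i = iota_img N d (i - 1)"
proof -
  obtain g h where "M_equivalence N deg d (elem_form N deg d) g h" by (rule elem_form_M_equivalence)
  then interpret Q: M_equivalence N deg d "elem_form N deg d" g h .
  have "i \<le> N" "i - 1 \<le> N" using i by auto
  then show ?thesis
    using E.paired_iff_cycles_plus_boundaries_eq[OF i] Q.cycles_plus_boundaries_eq_iff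
    by (simp add: essential_iff_unpaired iota_img_eq_iff)
qed

lemma forms_pair_iff_rel_hdim:
  assumes m: "m \<in> {1..N}" and n: "n \<in> {1..N}" and nm: "n < m"
  shows "forms_pair N deg d m n \<longleftrightarrow>
    rel_hdim d m n = rel_hdim d (m - 1) (n - 1) \<and>
    rel_hdim d (m - 1) (n - 1) = rel_hdim d (m - 1) n + 1 \<and>
    rel_hdim d (m - 1) n + 1 = rel_hdim d m (n - 1) + 1"
proof -
  obtain g h where "M_equivalence N deg d (elem_form N deg d) g h" by (rule elem_form_M_equivalence)
  then interpret Q: M_equivalence N deg d "elem_form N deg d" g h .
  have "\<not> E.bounds n m" using E.boundsD nm by fastforce
  moreover have "m \<le> N" "m - 1 \<le> N" using m by auto
  ultimately show ?thesis
    using E.bounds_iff_rel_hdim[OF m n nm] Q.rel_hdim_eq by (simp add: forms_pair_iff_bounds)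
qed

end

theorem lemma3p2:
  fixes N :: nat and deg :: "nat \<Rightarrow> int" and d :: "nat \<Rightarrow> nat \<Rightarrow> 'a::field"
  assumes "M_differential N deg d"
  shows
   "(\<forall>j\<in>{1..N}. essential N deg d j \<longleftrightarrow>
        iota_dim N deg d j (deg j) = iota_dim N deg d (j - 1) (deg j) + 1)
    \<and> (\<forall>k. card {j\<in>{1..N}. deg j = k \<and> essential N deg d j} = hdim_deg deg d {1..N} k)
    \<and> (\<forall>i\<in>{1..N}. \<not> essential N deg d i \<longleftrightarrow> iota_img N d i = iota_img N d (i - 1))
    \<and> (\<forall>m\<in>{1..N}. \<forall>n\<in>{1..N}. m > n \<longrightarrow>
        (forms_pair N deg d m n \<longleftrightarrow>
           rel_hdim d m n = rel_hdim d (m - 1) (n - 1) \<and>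
           rel_hdim d (m - 1) (n - 1) = rel_hdim d (m - 1) n + 1 \<and>
           rel_hdim d (m - 1) n + 1 = rel_hdim d m (n - 1) + 1))"
proof -
  interpret M_complex N deg d by (rule M_complex.intro) (rule assms)
  show ?thesis
    using essential_iff_iota_dim_step card_essential_eq_hdim_deg not_essential_iff_iota_img_eq
      forms_pair_iff_rel_hdim by blast
qed

end
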